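(* Suppose that all conditions listed in the context hold (without requiring $M_{24}<0$), where $R_4$ is chosen as $R_4=\mathbf{0}$. If $L_1=\Gamma_{11}^{-1}X_1^{-1}R_2$, $L_2=P_1^{-1}R_1+ET_{14}^{-1}T_{13}L_1$, $K_1=R_3P_2^{-1}$, then the feedback controller $u=K_1\hat x$ with the observer renders the closed-loop system ISS w.r.t. $w$.
   Context: System: $\dot x=Ax+Bu+Ep(q)+E_ww$, $y=Cx+Du+F_ww$, $q=C_qx$, $p:\mathbb{R}^{n_q}\to\mathbb{R}^{n_p}$, $p(\mathbf{0})=\mathbf{0}$; a symmetric $M$ is a $\delta$-MM for $p$ if $\begin{pmatrix}\delta q\\ \delta p\end{pmatrix}^\top M\begin{pmatrix}\delta q\\ \delta p\end{pmatrix}\geq0$ for all $q_1,q_2$, $\delta q=q_2-q_1$, $\delta p=p(q_2)-p(q_1)$. Observer: $\dot{\hat x}=A\hat x+Bu+Ep(\hat q+L_1(\hat y-y))+L_2(\hat y-y)$, $\hat y=C\hat x+Du$, $\hat q=C_q\hat x$. Conditions: (i) there exist a set $\mathcal{N}_1$ of symmetric pairs $(X_1,Y_1)$ ($X_1\in\mathbb{R}^{n_q\times n_q}$, $Y_1\in\mathbb{R}^{n_p\times n_p}$) and an invertible $T_1=\begin{pmatrix}T_{11}&T_{12}\\ T_{13}&T_{14}\end{pmatrix}$, $T_{14}$ invertible, with $T_1^\top\begin{pmatrix}X_1&\mathbf{0}\\ \mathbf{0}&-Y_1\end{pmatrix}T_1$ a $\delta$-MM of $p$ for all $(X_1,Y_1)\in\mathcal{N}_1$;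 (ii) there exist a set $\mathcal{N}_2$ of symmetric invertible pairs $(X_2,Y_2)$ and an invertible $T_2=\begin{pmatrix}T_{21}&T_{22}\\ T_{23}&T_{24}\end{pmatrix}$, $T_{24}$ invertible, with $T_2^\top\begin{pmatrix}X_2^{-1}&\mathbf{0}\\ \mathbf{0}&-Y_2^{-1}\end{pmatrix}T_2$ a $\delta$-MM of $p$ for all $(X_2,Y_2)\in\mathcal{N}_2$; (iii) there exist $\alpha_1,\alpha_2,\mu_1,\mu_2>0$, matrices $R_1,R_2,R_3,R_4$, $P_1=P_1^\top>0$, $P_2=P_2^\top>0$, $X_1=X_1^\top>0$, $Y_1=Y_1^\top$, $X_2=X_2^\top>0$, $Y_2=Y_2^\top>0$, $(X_i,Y_i)\in\mathcal{N}_i$, such that $\begin{pmatrix}\Phi-\varphi^\top Y_1\varphi & \phi^\top\\ \phi & -X_1\end{pmatrix}\leq0$ and $\begin{pmatrix}\Psi-\varphi^\top Y_2\varphi & \psi^\top\\ \psi & -X_2\end{pmatrix}\leq0$, with $\Phi=\begin{pmatrix}\Phi_0&-P_1\tilde E_1&P_1E_w+R_1F_w\\ *&\mathbf{0}&\mathbf{0}\\ *&*&-\mu_1I\end{pmatrix}$, $\Phi_0=\tilde A_1^\top P_1+P_1\tilde A_1+C^\top R_1^\top+R_1C+\alpha_1P_1$, $\Psi=\begin{pmatrix}\Psi_0&\tilde E_2Y_2+BR_4&E_w\\ *&\mathbf{0}&\mathbf{0}\\ *&*&-\mu_2I\end{pmatrix}$, $\Psi_0=\tilde A_2P_2+P_2\tilde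 A_2^\top+BR_3+R_3^\top B^\top+\alpha_2P_2$, $\phi=(-(X_1\Gamma_{11}C_q+R_2C),X_1\Gamma_{12},-R_2F_w)$, $\varphi=(\mathbf{0}_{n_p\times n_x},I_{n_p},\mathbf{0}_{n_p\times n_w})$, $\psi=(\Gamma_{21}C_qP_2,\Gamma_{22}Y_2,\mathbf{0}_{n_q\times n_w})$, $\tilde A_i=A-ET_{i4}^{-1}T_{i3}C_q$, $\tilde E_i=ET_{i4}^{-1}$, $\Gamma_{i1}=T_{i1}-T_{i2}T_{i4}^{-1}T_{i3}$, $\Gamma_{i2}=T_{i2}T_{i4}^{-1}$. Here $M_{24}$ denotes the lower-right $n_p\times n_p$ block of the multiplier in (ii). ISS w.r.t. $w$ means there exist $\beta\in\mathcal{KL}$, $\gamma\in\mathcal{K}$ with $\|(x,x-\hat x)(t)\|\leq\beta(\|(x,x-\hat x)(0)\|,t)+\gamma(\|w\|_\infty)$. *)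

theory Defs
  imports "HOL-Analysis.Analysis"
begin

text \<open>A matrix real^'c^'r has rows indexed by 'r and columns by 'c.\<close>

definition vjoin :: "real^'a \<Rightarrow> real^'b \<Rightarrow> real^('a + 'b)" where
  "vjoin u v = (\<chi> i. case i of Inl j \<Rightarrow> u $ j | Inr j \<Rightarrow> v $ j)"

definition hcat :: "real^'c1^'r \<Rightarrow> real^'c2^'r \<Rightarrow> real^('c1 + 'c2)^'r" where
  "hcat M N = (\<chi> i j. case j of Inl j1 \<Rightarrow> M $ i $ j1 | Inr j2 \<Rightarrow> N $ i $ j2)"

definition vcat :: "real^'c^'r1 \<Rightarrow> real^'c^'r2 \<Rightarrow> real^'c^('r1 + 'r2)" where
  "vcat M N = (\<chi> i. case i of Inl i1 \<Rightarrow> M $ i1 | Inr i2 \<Rightarrow> N $ i2)"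

definition blk2 :: "real^'c1^'r1 \<Rightarrow> real^'c2^'r1 \<Rightarrow> real^'c1^'r2 \<Rightarrow> real^'c2^'r2
                     \<Rightarrow> real^('c1 + 'c2)^('r1 + 'r2)" where
  "blk2 M11 M12 M21 M22 = vcat (hcat M11 M12) (hcat M21 M22)"

definition nsd :: "real^'n^'n \<Rightarrow> bool" where
  "nsd M \<longleftrightarrow> transpose M = M \<and> (\<forall>v. v \<bullet> (M *v v) \<le> 0)"

definition pdef :: "real^'n^'n \<Rightarrow> bool" where
  "pdef P \<longleftrightarrow> transpose P = P \<and> (\<forall>v. v \<noteq> 0 \<longrightarrow> v \<bullet> (P *v v) > 0)"

definition dMM :: "(real^'nq \<Rightarrow> real^'np) \<Rightarrow> real^('nq + 'np)^('nq + 'np) \<Rightarrow> bool" where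
  "dMM p M \<longleftrightarrow> transpose M = M \<and>
     (\<forall>q1 q2. vjoin (q2 - q1) (p q2 - p q1) \<bullet> (M *v vjoin (q2 - q1) (p q2 - p q1)) \<ge> 0)"

definition classK :: "(real \<Rightarrow> real) \<Rightarrow> bool" where
  "classK \<gamma> \<longleftrightarrow> \<gamma> 0 = 0 \<and> continuous_on {0..} \<gamma> \<and> strict_mono_on {0..} \<gamma>"

definition classKL :: "(real \<Rightarrow> real \<Rightarrow> real) \<Rightarrow> bool" where
  "classKL \<beta> \<longleftrightarrow> (\<forall>t\<ge>0. classK (\<lambda>r. \<beta> r t)) \<and>
     (\<forall>r\<ge>0. (\<forall>s t. 0 \<le> s \<longrightarrow> s \<le> t \<longrightarrow> \<beta> r t \<le> \<beta> r s) \<and> ((\<beta> r) \<longlongrightarrow> 0) at_top)"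

definition cl_rhs_x ::
  "real^'nx^'nx \<Rightarrow> real^'nu^'nx \<Rightarrow> real^'np^'nx \<Rightarrow> real^'nw^'nx \<Rightarrow> real^'nx^'nq
   \<Rightarrow> (real^'nq \<Rightarrow> real^'np) \<Rightarrow> real^'nx^'nu
   \<Rightarrow> real^'nx \<Rightarrow> real^'nx \<Rightarrow> real^'nw \<Rightarrow> real^'nx" where
  "cl_rhs_x A B E Ew Cq p K1 x xh w = A *v x + B *v (K1 *v xh) + E *v p (Cq *v x) + Ew *v w"

definition cl_rhs_xh ::
  "real^'nx^'nx \<Rightarrow> real^'nu^'nx \<Rightarrow> real^'nx^'ny \<Rightarrow> real^'nu^'ny \<Rightarrow> real^'np^'nx
   \<Rightarrow> real^'nw^'ny \<Rightarrow> real^'nx^'nq \<Rightarrow> (real^'nq \<Rightarrow> real^'np)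
   \<Rightarrow> real^'ny^'nq \<Rightarrow> real^'ny^'nx \<Rightarrow> real^'nx^'nu
   \<Rightarrow> real^'nx \<Rightarrow> real^'nx \<Rightarrow> real^'nw \<Rightarrow> real^'nx" where
  "cl_rhs_xh A B C D E Fw Cq p L1 L2 K1 x xh w =
     (let u = K1 *v xh;
          y = C *v x + D *v u + Fw *v w;
          yh = C *v xh + D *v u;
          qh = Cq *v xh
      in A *v xh + B *v u + E *v p (qh + L1 *v (yh - y)) + L2 *v (yh - y))"

text \<open>Solutions on [0,\<infinity>) in the Caratheodory (integral) sense.\<close>
definition cl_solution where
  "cl_solution A B C D E Ew Fw Cq p L1 L2 K1 x xh w \<longleftrightarrow>
     (\<forall>t\<ge>0. ((\<lambda>s. cl_rhs_x A B E Ew Cq p K1 (x s) (xh s) (w s)) has_integral (x t - x 0)) {0..t}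
          \<and> ((\<lambda>s. cl_rhs_xh A B C D E Fw Cq p L1 L2 K1 (x s) (xh s) (w s))
                 has_integral (xh t - xh 0)) {0..t})"

definition closed_loop_ISS where
  "closed_loop_ISS A B C D E Ew Fw Cq p L1 L2 K1 \<longleftrightarrow>
     (\<exists>\<beta> \<gamma>. classKL \<beta> \<and> classK \<gamma> \<and>
        (\<forall>x xh w. cl_solution A B C D E Ew Fw Cq p L1 L2 K1 x xh w \<longrightarrow>
           bdd_above ((\<lambda>s. norm (w s)) ` {0..}) \<longrightarrow>
           (\<forall>t\<ge>0. norm (x t, x t - xh t)
                    \<le> \<beta> (norm (x 0, x 0 - xh 0)) t + \<gamma> (SUP s\<in>{0..}. norm (w s)))))"

end

theory Submission
  imports Defs
begin

text \<open>Two quadratic storage functions come from the LMIs: V2(x) = x' P2^-1 x for the plant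
  under u = K1 x and V1(e) = e' P1 e for the observer error e = xh - x. The off-diagonal
  blocks of each LMI carry the incremental multiplier of p, so by the S-procedure each LMI
  becomes a dissipation inequality once the multiplier inequality is applied to the right pair
  of arguments: (q, 0) for the plant and (q, qh) for the observer, where L1 = Gam11^-1 X1^-1 R2
  makes the multiplier channel of the error dynamics match the LMI. Feeding back xh instead of x
  leaves a cross term, which Young's inequality bounds by V2 and V1; weighting V1 heavily enough
  gives V = V2 + k V1 with dV/dt <= -a V + c |w|^2. Solutions are only Caratheodory solutions,
  so the comparison estimate V(t) <= exp(-a t) V(0) + c |w|^2 / a is proved from Henstock's
  lemma, and bounding V above and below by multiples of the squared state norm gives ISS.\<close>

lemma sum_UNIV_Plus:
  "(\<Sum>i\<in>(UNIV::('a::finite + 'b::finite) set). f i) = (\<Sum>i\<in>UNIV. f (Inl i)) + (\<Sum>i\<in>UNIV. f (Inr i))"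
  by (subst UNIV_Plus_UNIV[symmetric], subst sum.Plus) auto

lemma inner_vjoin: "vjoin a b \<bullet> vjoin c d = a \<bullet> c + b \<bullet> d"
  by (simp add: inner_vec_def vjoin_def sum_UNIV_Plus)

lemma norm_vjoin_power2: "(norm (vjoin a b))\<^sup>2 = (norm a)\<^sup>2 + (norm b)\<^sup>2"
  by (simp add: power2_norm_eq_inner inner_vjoin)

lemma vjoin_add: "vjoin a b + vjoin c d = vjoin (a + c) (b + d)"
  by (simp add: vjoin_def vec_eq_iff split: sum.split)

lemma vjoin_diff: "vjoin a b - vjoin c d = vjoin (a - c) (b - d)"
  by (simp add: vjoin_def vec_eq_iff split: sum.split)

lemma hcat_mult_vjoin: "hcat M N *v vjoin u v = M *v u + N *v v"
  by (simp add: vec_eq_iff matrix_vector_mult_def hcat_def vjoin_def sum_UNIV_Plus)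

lemma vcat_mult: "vcat M N *v u = vjoin (M *v u) (N *v u)"
  by (simp add: vec_eq_iff matrix_vector_mult_def vcat_def vjoin_def split: sum.split)

lemma blk2_mult_vjoin: "blk2 A B C D *v vjoin u v = vjoin (A *v u + B *v v) (C *v u + D *v v)"
  by (simp add: blk2_def vcat_mult hcat_mult_vjoin)

lemma transpose_blk2: "transpose (blk2 A B C D) = blk2 (transpose A) (transpose C) (transpose B) (transpose D)"
  by (simp add: vec_eq_iff transpose_def blk2_def vcat_def hcat_def split: sum.split)

lemma matrix_vector_mult_uminus_left: "(- A) *v x = - (A *v (x::real^'n))"
  by (simp add: vec_eq_iff matrix_vector_mult_def sum_negf)

lemma matrix_vector_mult_uminus_right: "A *v (- x) = - (A *v (x::real^'n))"
  by (simp add: vec_eq_iff matrix_vector_mult_def sum_negf)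

lemma matrix_vector_mult_scaleR_left: "(c *\<^sub>R A) *v x = c *\<^sub>R (A *v (x::real^'n))"
  by (simp add: vec_eq_iff matrix_vector_mult_def sum_distrib_left mult.assoc)

lemmas matrix_vector_simps = matrix_vector_mul_assoc[symmetric] matrix_vector_mult_add_rdistrib
  matrix_vector_mult_diff_rdistrib matrix_vector_right_distrib matrix_vector_mult_diff_distrib
  matrix_vector_mult_uminus_left matrix_vector_mult_uminus_right matrix_vector_mult_scaleR_left

lemma inner_transpose_mult: "(u::real^'m) \<bullet> (transpose M *v v) = (M *v u) \<bullet> v"
  by (metis dot_lmul_matrix inner_commute transpose_matrix_vector)

lemma inner_transpose_matrix_mult: "(u::real^'m) \<bullet> ((transpose M ** N) *v v) = (M *v u) \<bullet> (N *v v)"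
  by (simp only: matrix_vector_mul_assoc[symmetric] inner_transpose_mult)

lemma inner_symmetric: "transpose P = P \<Longrightarrow> (u::real^'n) \<bullet> (P *v v) = v \<bullet> (P *v u)"
  by (metis inner_commute inner_transpose_mult)

lemma
  fixes A :: "real^'n^'n"
  assumes "invertible A"
  shows matrix_mul_rinv: "A ** matrix_inv A = mat 1"
    and matrix_mul_linv: "matrix_inv A ** A = mat 1"
    and matrix_vector_mul_rinv: "A *v (matrix_inv A *v v) = v"
    and matrix_vector_mul_linv: "matrix_inv A *v (A *v v) = v"
proof -
  have "A ** matrix_inv A = mat 1 \<and> matrix_inv A ** A = mat 1"
    using assms unfolding invertible_def matrix_inv_def by (rule someI_ex)
  then show "A ** matrix_inv A = mat 1" "matrix_inv A ** A = mat 1"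
    "A *v (matrix_inv A *v v) = v" "matrix_inv A *v (A *v v) = v"
    by (simp_all add: matrix_vector_mul_assoc)
qed

lemma invertible_matrix_inv: "invertible (A::real^'n^'n) \<Longrightarrow> invertible (matrix_inv A)"
  using matrix_mul_linv matrix_mul_rinv unfolding invertible_def by blast

lemma pdef_nonneg: "pdef P \<Longrightarrow> v \<bullet> (P *v v) \<ge> 0"
  unfolding pdef_def by (cases "v = 0") (auto intro: less_imp_le)

lemma pdef_invertible:
  fixes P :: "real^'n^'n"
  assumes "pdef P"
  shows "invertible P"
proof -
  have "P *v x = 0 \<Longrightarrow> x = 0" for x
    using assms unfolding pdef_def by (metis inner_zero_right less_irrefl)
  then show ?thesis
    unfolding invertible_left_inverse matrix_left_invertible_ker by blast
qed

lemma pdef_scaleR: "pdef P \<Longrightarrow> k > 0 \<Longrightarrow> pdef (k *\<^sub>R P)"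
  by (simp add: pdef_def transpose_scalar matrix_vector_mult_scaleR_left)

lemma pdef_blk2_diagonal:
  assumes P: "pdef P" and R: "pdef R"
  shows "pdef (blk2 P 0 0 R)"
  unfolding pdef_def
proof (intro conjI allI impI)
  have "transpose (0::real^'a^'b) = 0" "transpose (0::real^'b^'a) = 0"
    by (simp_all add: vec_eq_iff transpose_def)
  then show "transpose (blk2 P 0 0 R) = blk2 P 0 0 R"
    using P R by (simp add: pdef_def transpose_blk2)
  fix w :: "real^('a + 'b)"
  assume "w \<noteq> 0"
  define u v where "u = (\<chi> i. w $ Inl i)" and "v = (\<chi> i. w $ Inr i)"
  have w: "w = vjoin u v"
    by (simp add: u_def v_def vjoin_def vec_eq_iff split: sum.split)
  have "vjoin (0::real^'a) (0::real^'b) = 0"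
    by (simp add: vjoin_def vec_eq_iff split: sum.split)
  then have "u \<noteq> 0 \<or> v \<noteq> 0"
    using \<open>w \<noteq> 0\<close> w by auto
  then show "w \<bullet> (blk2 P 0 0 R *v w) > 0"
    using P R pdef_nonneg[OF P, of u] pdef_nonneg[OF R, of v]
    unfolding w pdef_def by (auto simp: blk2_mult_vjoin inner_vjoin add_pos_nonneg add_nonneg_pos)
qed

lemma matrix_vector_mult_bound:
  fixes M :: "real^'n^'m"
  obtains n where "n > 0" "\<And>v. norm (M *v v) \<le> n * norm v"
  using bounded_linear.pos_bounded[OF matrix_vector_mul_bounded_linear[of M]]
  by (metis mult.commute)

lemma inner_matrix_vector_bound:
  assumes "\<And>v. norm (M *v v) \<le> n * norm v"
  shows "\<bar>u \<bullet> (M *v v)\<bar> \<le> n * (norm u * norm v)"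
proof -
  have "\<bar>u \<bullet> (M *v v)\<bar> \<le> norm u * norm (M *v v)" by (rule Cauchy_Schwarz_ineq2)
  also have "\<dots> \<le> norm u * (n * norm v)" by (rule mult_left_mono[OF assms norm_ge_zero])
  finally show ?thesis by (simp add: mult_ac)
qed

lemma pdef_coercive:
  fixes P :: "real^'n^'n"
  assumes "pdef P"
  obtains m where "m > 0" "\<And>v. v \<bullet> (P *v v) \<ge> m * (norm v)\<^sup>2"
proof -
  have cont: "continuous_on (sphere 0 1) (\<lambda>v::real^'n. v \<bullet> (P *v v))"
    by (intro continuous_intros linear_continuous_on) (auto intro: bounded_linear_compose)
  obtain v0 where v0: "v0 \<in> sphere 0 1" "\<And>v. v \<in> sphere 0 1 \<Longrightarrow> v0 \<bullet> (P *v v0) \<le> v \<bullet> (P *v v)"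
    using continuous_attains_inf[OF compact_sphere _ cont] by (auto simp: mem_sphere_0)
  have "v \<bullet> (P *v v) \<ge> v0 \<bullet> (P *v v0) * (norm v)\<^sup>2" for v
  proof (cases "v = 0")
    case False
    define u where "u = (1 / norm v) *\<^sub>R v"
    have "v \<bullet> (P *v v) = (norm v)\<^sup>2 * (u \<bullet> (P *v u))"
      using False by (simp add: u_def matrix_vector_mult_scaleR power2_eq_square)
    moreover have "u \<in> sphere 0 1"
      using False by (simp add: u_def)
    ultimately show ?thesis
      using v0(2)[of u] mult_right_mono[of "v0 \<bullet> (P *v v0)" "u \<bullet> (P *v u)" "(norm v)\<^sup>2"] by (simp add: mult.commute)
  qed simp
  moreover have "v0 \<noteq> 0"
    using v0(1) by auto
  then have "v0 \<bullet> (P *v v0) > 0"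
    using assms unfolding pdef_def by blast
  ultimately show ?thesis using that by blast
qed

section \<open>Dissipation inequalities from the LMIs\<close>

lemma dMM_transformed_ineq:
  assumes "dMM p (transpose (blk2 T11 T12 T13 T14) ** blk2 X 0 0 (- Y) ** blk2 T11 T12 T13 T14)"
  shows "(T13 *v (q2 - q1) + T14 *v (p q2 - p q1)) \<bullet> (Y *v (T13 *v (q2 - q1) + T14 *v (p q2 - p q1)))
       \<le> (T11 *v (q2 - q1) + T12 *v (p q2 - p q1)) \<bullet> (X *v (T11 *v (q2 - q1) + T12 *v (p q2 - p q1)))"
proof -
  define v where "v = vjoin (q2 - q1) (p q2 - p q1)"
  have "0 \<le> v \<bullet> ((transpose (blk2 T11 T12 T13 T14) ** blk2 X 0 0 (- Y) ** blk2 T11 T12 T13 T14) *v v)"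
    using assms unfolding dMM_def v_def by blast
  also have "\<dots> = (blk2 T11 T12 T13 T14 *v v) \<bullet> (blk2 X 0 0 (- Y) *v (blk2 T11 T12 T13 T14 *v v))"
    by (simp only: matrix_vector_mul_assoc[symmetric] inner_transpose_mult)
  finally show ?thesis
    unfolding v_def blk2_mult_vjoin by (simp add: inner_vjoin matrix_vector_mult_uminus_left)
qed

lemma nsd_blk2_quadratic_nonpos:
  assumes "nsd (blk2 (Phi - transpose V ** Y ** V) (transpose Psi) Psi (- X))"
    and "Psi *v a = X *v r" and "(V *v a) \<bullet> (Y *v (V *v a)) \<le> r \<bullet> (X *v r)"
  shows "a \<bullet> (Phi *v a) \<le> 0"
proof -
  have "vjoin a r \<bullet> (blk2 (Phi - transpose V ** Y ** V) (transpose Psi) Psi (- X) *v vjoin a r)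
      = a \<bullet> (Phi *v a) - (V *v a) \<bullet> (Y *v (V *v a)) + r \<bullet> (X *v r)"
  proof -
    have "a \<bullet> ((transpose V ** Y ** V) *v a) = (V *v a) \<bullet> (Y *v (V *v a))"
      by (simp only: matrix_vector_mul_assoc[symmetric] inner_transpose_mult)
    moreover have "a \<bullet> (transpose Psi *v r) = r \<bullet> (X *v r)"
      by (simp only: inner_transpose_mult assms(2) inner_commute)
    ultimately show ?thesis
      by (simp add: blk2_mult_vjoin inner_vjoin inner_add_right inner_diff_right assms(2)
          matrix_vector_mult_diff_rdistrib matrix_vector_mult_uminus_left del: transpose_matrix_vector)
  qed
  moreover have "vjoin a r \<bullet> (blk2 (Phi - transpose V ** Y ** V) (transpose Psi) Psi (- X) *v vjoin a r) \<le> 0"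
    using assms(1) unfolding nsd_def by blast
  ultimately show ?thesis
    using assms(3) by linarith
qed

lemma lmi_block_quadratic_form:
  "vjoin (vjoin u z) w \<bullet> (blk2 (blk2 P0 M (transpose M) 0) (vcat G 0) (transpose (vcat G 0))
      (- (\<mu> *\<^sub>R mat 1)) *v vjoin (vjoin u z) w)
   = u \<bullet> (P0 *v u) + 2 * (u \<bullet> (M *v z)) + 2 * (u \<bullet> (G *v w)) - \<mu> * (w \<bullet> w)"
proof -
  have "z \<bullet> (transpose M *v u) = u \<bullet> (M *v z)"
    by (simp only: inner_transpose_mult inner_commute)
  moreover have "w \<bullet> (transpose (vcat G 0) *v vjoin u z) = u \<bullet> (G *v w)"
    by (simp only: inner_transpose_mult vcat_mult inner_vjoin matrix_vector_mult_0
        inner_zero_left add_0_right inner_commute)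
  ultimately show ?thesis
    by (simp add: blk2_mult_vjoin vcat_mult inner_vjoin inner_add_right inner_diff_right
        matrix_vector_mult_uminus_left matrix_vector_mult_scaleR_left del: transpose_matrix_vector)
qed

lemma selector_mult_vjoin: "hcat (hcat 0 (mat 1)) 0 *v vjoin (vjoin u z) w = z"
  by (simp add: hcat_mult_vjoin)

lemma lmi_dissipation:
  assumes "nsd (blk2 (blk2 (blk2 P0 M (transpose M) 0) (vcat G 0) (transpose (vcat G 0))
      (- (\<mu> *\<^sub>R mat 1)) - transpose V ** Y ** V) (transpose Psi) Psi (- X))"
    and "V = hcat (hcat 0 (mat 1)) 0"
    and "Psi *v vjoin (vjoin u z) w = X *v r" and "z \<bullet> (Y *v z) \<le> r \<bullet> (X *v r)"
  shows "u \<bullet> (P0 *v u) + 2 * (u \<bullet> (M *v z)) + 2 * (u \<bullet> (G *v w)) \<le> \<mu> * (w \<bullet> w)"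
  using nsd_blk2_quadratic_nonpos[OF assms(1,3)] assms(2,4)
  by (simp add: selector_mult_vjoin lmi_block_quadratic_form)

lemma quadratic_form_transpose_mult:
  "(u::real^'n) \<bullet> ((transpose M ** transpose N) *v u) = u \<bullet> (N *v (M *v u))"
  by (simp only: inner_transpose_matrix_mult inner_transpose_mult inner_commute)

lemma observer_error_dissipation:
  fixes T11 :: "real^'nq^'nq" and T12 :: "real^'np^'nq" and T13 :: "real^'nq^'np"
    and T14 :: "real^'np^'np" and X1 :: "real^'nq^'nq" and P1 :: "real^'nx^'nx"
  assumes T14_inv: "invertible T14" and P1_sym: "transpose P1 = P1" and P1_inv: "invertible P1"
    and X1_inv: "invertible X1" and Gam11_inv: "invertible Gam11"
    and mult: "dMM p (transpose (blk2 T11 T12 T13 T14) ** blk2 X1 0 0 (- Y1) ** blk2 T11 T12 T13 T14)"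
    and At1_def: "At1 = A - E ** matrix_inv T14 ** T13 ** Cq"
    and Et1_def: "Et1 = E ** matrix_inv T14"
    and Gam11_def: "Gam11 = T11 - T12 ** matrix_inv T14 ** T13"
    and Gam12_def: "Gam12 = T12 ** matrix_inv T14"
    and LMI1: "nsd (let
        Phi0 = transpose At1 ** P1 + P1 ** At1 + transpose C ** transpose R1 + R1 ** C + \<alpha>1 *\<^sub>R P1;
        Phi = blk2 (blk2 Phi0 (- (P1 ** Et1)) (transpose (- (P1 ** Et1))) (0 :: real^'np^'np))
                   (vcat (P1 ** Ew + R1 ** Fw) (0 :: real^'nw^'np))
                   (transpose (vcat (P1 ** Ew + R1 ** Fw) (0 :: real^'nw^'np)))
                   (- (\<mu>1 *\<^sub>R mat 1 :: real^'nw^'nw));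
        vphi = hcat (hcat (0 :: real^'nx^'np) (mat 1 :: real^'np^'np)) (0 :: real^'nw^'np);
        phi = hcat (hcat (- (X1 ** Gam11 ** Cq + R2 ** C)) (X1 ** Gam12)) (- (R2 ** Fw))
      in blk2 (Phi - transpose vphi ** Y1 ** vphi) (transpose phi) phi (- X1))"
    and L1_def: "L1 = matrix_inv Gam11 ** matrix_inv X1 ** R2"
    and L2_def: "L2 = matrix_inv P1 ** R1 + E ** matrix_inv T14 ** T13 ** L1"
  shows "2 * ((xh - x) \<bullet> (P1 *v (cl_rhs_xh A B C D E Fw Cq p L1 L2 K1 x xh w - cl_rhs_x A B E Ew Cq p K1 x xh w)))
     \<le> - \<alpha>1 * ((xh - x) \<bullet> (P1 *v (xh - x))) + \<mu>1 * (w \<bullet> w)"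
proof -
  note T14 = matrix_vector_mul_rinv[OF T14_inv] matrix_vector_mul_linv[OF T14_inv]
  define d where "d = xh - x"
  define e where "e = C *v d - Fw *v w"
  define qh where "qh = Cq *v xh + L1 *v e"
  define dq where "dq = qh - Cq *v x"
  define dp where "dp = p qh - p (Cq *v x)"
  define z where "z = T13 *v dq + T14 *v dp"
  define r where "r = T11 *v dq + T12 *v dp"
  define fd where "fd = cl_rhs_xh A B C D E Fw Cq p L1 L2 K1 x xh w - cl_rhs_x A B E Ew Cq p K1 x xh w"
  have "cl_rhs_xh A B C D E Fw Cq p L1 L2 K1 x xh w = A *v xh + B *v (K1 *v xh) + E *v p qh + L2 *v e"
    unfolding cl_rhs_xh_def Let_def qh_def e_def d_def by (simp add: algebra_simps)
  then have "fd = A *v d + E *v dp + L2 *v e - Ew *v w"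
    unfolding fd_def cl_rhs_x_def dp_def d_def by (simp add: algebra_simps)
  moreover have dq: "dq = Cq *v d + L1 *v e"
    unfolding dq_def qh_def d_def by (simp add: algebra_simps)
  moreover have "dp = matrix_inv T14 *v z - matrix_inv T14 *v (T13 *v dq)"
    unfolding z_def by (simp add: algebra_simps T14)
  ultimately have "fd = At1 *v d + Et1 *v z + matrix_inv P1 *v (R1 *v e) - Ew *v w"
    unfolding L2_def At1_def Et1_def by (simp add: matrix_vector_simps algebra_simps)
  then have P1fd: "P1 *v fd = P1 *v (At1 *v d) + P1 *v (Et1 *v z) + R1 *v e - P1 *v (Ew *v w)"
    by (simp add: matrix_vector_simps matrix_vector_mul_rinv[OF P1_inv])
  have r: "Gam11 *v dq + Gam12 *v z = r"
    unfolding Gam11_def Gam12_def z_def r_def by (simp add: matrix_vector_simps T14)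
  have "X1 *v (Gam11 *v (L1 *v e)) = R2 *v e"
    unfolding L1_def
    by (simp add: matrix_vector_simps matrix_vector_mul_rinv[OF Gam11_inv] matrix_vector_mul_rinv[OF X1_inv])
  then have "X1 *v r = (X1 ** Gam11 ** Cq + R2 ** C) *v d + (X1 ** Gam12) *v z - (R2 ** Fw) *v w"
    unfolding r[symmetric] dq e_def by (simp add: matrix_vector_simps algebra_simps)
  then have phi: "hcat (hcat (- (X1 ** Gam11 ** Cq + R2 ** C)) (X1 ** Gam12)) (- (R2 ** Fw))
      *v vjoin (vjoin (- d) z) w = X1 *v r"
    by (simp add: hcat_mult_vjoin matrix_vector_simps algebra_simps)
  have "z \<bullet> (Y1 *v z) \<le> r \<bullet> (X1 *v r)"
    using dMM_transformed_ineq[OF mult, of qh "Cq *v x"] unfolding r_def z_def dq_def dp_def .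
  note diss = lmi_dissipation[OF LMI1[unfolded Let_def] refl phi this]
  have "(- d) \<bullet> ((transpose At1 ** P1 + P1 ** At1 + transpose C ** transpose R1 + R1 ** C + \<alpha>1 *\<^sub>R P1) *v (- d))
      = 2 * (d \<bullet> (P1 *v (At1 *v d))) + 2 * (d \<bullet> (R1 *v (C *v d))) + \<alpha>1 * (d \<bullet> (P1 *v d))"
    using quadratic_form_transpose_mult[of d At1 P1] quadratic_form_transpose_mult[of d C R1] P1_sym
    by (simp add: matrix_vector_simps inner_add_right inner_diff_right del: transpose_matrix_vector)
  with diss have "2 * (d \<bullet> (P1 *v fd)) + \<alpha>1 * (d \<bullet> (P1 *v d)) \<le> \<mu>1 * (w \<bullet> w)"
    unfolding P1fd e_def by (simp add: inner_add_right inner_diff_right matrix_vector_simps algebra_simps)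
  then show ?thesis
    unfolding fd_def d_def by linarith
qed

lemma plant_dissipation:
  fixes T21 :: "real^'nq^'nq" and T22 :: "real^'np^'nq" and T23 :: "real^'nq^'np"
    and T24 :: "real^'np^'np" and X2 :: "real^'nq^'nq" and Y2 :: "real^'np^'np"
    and P2 :: "real^'nx^'nx"
  assumes T24_inv: "invertible T24" and P2_sym: "transpose P2 = P2" and P2_inv: "invertible P2"
    and X2_inv: "invertible X2" and Y2_inv: "invertible Y2" and p0: "p 0 = 0"
    and mult: "dMM p (transpose (blk2 T21 T22 T23 T24) ** blk2 (matrix_inv X2) 0 0 (- matrix_inv Y2)
                 ** blk2 T21 T22 T23 T24)"
    and At2_def: "At2 = A - E ** matrix_inv T24 ** T23 ** Cq"
    and Et2_def: "Et2 = E ** matrix_inv T24"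
    and Gam21_def: "Gam21 = T21 - T22 ** matrix_inv T24 ** T23"
    and Gam22_def: "Gam22 = T22 ** matrix_inv T24"
    and LMI2: "nsd (let
        Psi0 = At2 ** P2 + P2 ** transpose At2 + B ** R3 + transpose R3 ** transpose B + \<alpha>2 *\<^sub>R P2;
        Psi = blk2 (blk2 Psi0 (Et2 ** Y2 + B ** R4) (transpose (Et2 ** Y2 + B ** R4)) (0 :: real^'np^'np))
                   (vcat Ew (0 :: real^'nw^'np))
                   (transpose (vcat Ew (0 :: real^'nw^'np)))
                   (- (\<mu>2 *\<^sub>R mat 1 :: real^'nw^'nw));
        vphi = hcat (hcat (0 :: real^'nx^'np) (mat 1 :: real^'np^'np)) (0 :: real^'nw^'np);
        psi = hcat (hcat (Gam21 ** Cq ** P2) (Gam22 ** Y2)) (0 :: real^'nw^'nq)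
      in blk2 (Psi - transpose vphi ** Y2 ** vphi) (transpose psi) psi (- X2))"
    and R4_zero: "R4 = 0"
    and K1_def: "K1 = R3 ** matrix_inv P2"
  shows "2 * ((matrix_inv P2 *v x) \<bullet> cl_rhs_x A B E Ew Cq p K1 x xh w)
     \<le> - \<alpha>2 * ((matrix_inv P2 *v x) \<bullet> (P2 *v (matrix_inv P2 *v x))) + \<mu>2 * (w \<bullet> w)
        + 2 * ((matrix_inv P2 *v x) \<bullet> ((B ** K1) *v (xh - x)))"
proof -
  note T24 = matrix_vector_mul_rinv[OF T24_inv] matrix_vector_mul_linv[OF T24_inv]
  define \<xi> where "\<xi> = matrix_inv P2 *v x"
  define z where "z = T23 *v (Cq *v x) + T24 *v p (Cq *v x)"
  define s where "s = T21 *v (Cq *v x) + T22 *v p (Cq *v x)"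
  define \<zeta> where "\<zeta> = matrix_inv Y2 *v z"
  define r where "r = matrix_inv X2 *v s"
  have x: "x = P2 *v \<xi>"
    unfolding \<xi>_def by (simp add: matrix_vector_mul_rinv[OF P2_inv])
  have K1x: "K1 *v x = R3 *v \<xi>"
    unfolding K1_def \<xi>_def by (simp add: matrix_vector_mul_assoc)
  have Y2\<zeta>: "Y2 *v \<zeta> = z" and X2r: "X2 *v r = s"
    unfolding \<zeta>_def r_def by (simp_all add: matrix_vector_mul_rinv Y2_inv X2_inv)
  have pCqx: "p (Cq *v x) = matrix_inv T24 *v z - matrix_inv T24 *v (T23 *v (Cq *v x))"
    unfolding z_def by (simp add: algebra_simps T24)
  have fx: "cl_rhs_x A B E Ew Cq p K1 x xh w
      = At2 *v x + B *v (K1 *v x) + Et2 *v z + B *v (K1 *v (xh - x)) + Ew *v w"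
    unfolding cl_rhs_x_def pCqx At2_def Et2_def by (simp add: matrix_vector_simps algebra_simps)
  have "Gam21 *v (Cq *v x) + Gam22 *v z = s"
    unfolding Gam21_def Gam22_def z_def s_def by (simp add: matrix_vector_simps T24)
  then have psi: "hcat (hcat (Gam21 ** Cq ** P2) (Gam22 ** Y2)) 0 *v vjoin (vjoin \<xi> \<zeta>) w = X2 *v r"
    by (simp add: hcat_mult_vjoin matrix_vector_simps X2r Y2\<zeta> flip: x)
  have "z \<bullet> (matrix_inv Y2 *v z) \<le> s \<bullet> (matrix_inv X2 *v s)"
    using dMM_transformed_ineq[OF mult, of "Cq *v x" 0] by (simp add: p0 z_def s_def)
  then have "\<zeta> \<bullet> (Y2 *v \<zeta>) \<le> r \<bullet> (X2 *v r)"
    unfolding Y2\<zeta> X2r by (simp add: \<zeta>_def r_def inner_commute)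
  note diss = lmi_dissipation[OF LMI2[unfolded Let_def] refl psi this]
  have "\<xi> \<bullet> ((At2 ** P2 + P2 ** transpose At2 + B ** R3 + transpose R3 ** transpose B + \<alpha>2 *\<^sub>R P2) *v \<xi>)
      = 2 * (\<xi> \<bullet> (At2 *v x)) + 2 * (\<xi> \<bullet> (B *v (K1 *v x))) + \<alpha>2 * (\<xi> \<bullet> (P2 *v \<xi>))"
    using quadratic_form_transpose_mult[of \<xi> P2 At2] quadratic_form_transpose_mult[of \<xi> R3 B] P2_sym
    by (simp add: matrix_vector_simps inner_add_right K1x flip: x del: transpose_matrix_vector)
  with diss show ?thesis
    unfolding fx \<xi>_def[symmetric] R4_zero
    by (simp add: inner_add_right matrix_vector_simps Y2\<zeta> algebra_simps)
qed

section \<open>A comparison lemma for Caratheodory solutions\<close>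

lemma quadratic_form_increment_bound:
  fixes Xu Xv Xt Ft :: "real^'k" and Q :: "real^'k^'k"
  assumes Qsym: "transpose Q = Q" and nQ: "\<And>v. norm (Q *v v) \<le> nQ * norm v" "nQ \<ge> 0"
    and l: "l \<ge> 0" and BX: "norm Xt \<le> BX"
    and close: "norm (Xu - Xt) \<le> \<eta>" "norm (Xv - Xt) \<le> \<eta>"
    and \<eta>: "0 < \<eta>" "\<eta> \<le> 1" "\<eta> * norm Ft \<le> \<epsilon>"
  shows "Xv \<bullet> (Q *v Xv) - Xu \<bullet> (Q *v Xu)
     \<le> 2 * l * (Xt \<bullet> (Q *v Ft)) + 2 * BX * nQ * norm (Xv - Xu - l *\<^sub>R Ft)
        + 4 * nQ * (l * \<epsilon> + norm (Xv - Xu - l *\<^sub>R Ft))"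
proof -
  define \<Delta> where "\<Delta> = Xv - Xu"
  define er where "er = \<Delta> - l *\<^sub>R Ft"
  have "Xv \<bullet> (Q *v Xv) - Xu \<bullet> (Q *v Xu) = 2 * (Xu \<bullet> (Q *v \<Delta>)) + \<Delta> \<bullet> (Q *v \<Delta>)"
    using inner_symmetric[OF Qsym, of \<Delta> Xu]
    by (simp add: \<Delta>_def matrix_vector_mult_diff_distrib inner_diff_left inner_diff_right)
  also have "Xu \<bullet> (Q *v \<Delta>) = l * (Xt \<bullet> (Q *v Ft)) + Xt \<bullet> (Q *v er) + (Xu - Xt) \<bullet> (Q *v \<Delta>)"
    by (simp add: er_def matrix_vector_mult_diff_distrib matrix_vector_mult_scaleR
        inner_diff_left inner_diff_right)
  finally have split: "Xv \<bullet> (Q *v Xv) - Xu \<bullet> (Q *v Xu)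
      = 2 * l * (Xt \<bullet> (Q *v Ft)) + 2 * (Xt \<bullet> (Q *v er)) + 2 * ((Xu - Xt) \<bullet> (Q *v \<Delta>)) + \<Delta> \<bullet> (Q *v \<Delta>)"
    by simp
  have "Xt \<bullet> (Q *v er) \<le> BX * nQ * norm er"
    using inner_matrix_vector_bound[OF nQ(1), of Xt er] mult_right_mono[OF BX, of "nQ * norm er"] nQ(2)
    by (simp add: mult_ac)
  moreover have "norm \<Delta> \<le> 2 * \<eta>"
    using norm_triangle_ineq4[of "Xv - Xt" "Xu - Xt"] close by (simp add: \<Delta>_def)
  then have "\<Delta> \<bullet> (Q *v \<Delta>) \<le> nQ * (2 * \<eta> * norm \<Delta>)"
    using inner_matrix_vector_bound[OF nQ(1), of \<Delta> \<Delta>] abs_ge_self[of "\<Delta> \<bullet> (Q *v \<Delta>)"]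
      mult_left_mono[OF mult_right_mono[OF \<open>norm \<Delta> \<le> 2 * \<eta>\<close> norm_ge_zero[of \<Delta>]] nQ(2)]
    by linarith
  moreover have "(Xu - Xt) \<bullet> (Q *v \<Delta>) \<le> nQ * (\<eta> * norm \<Delta>)"
    using inner_matrix_vector_bound[OF nQ(1), of "Xu - Xt" \<Delta>] abs_ge_self[of "(Xu - Xt) \<bullet> (Q *v \<Delta>)"]
      mult_left_mono[OF mult_right_mono[OF close(1) norm_ge_zero[of \<Delta>]] nQ(2)]
    by linarith
  moreover have "\<eta> * norm \<Delta> \<le> l * \<epsilon> + norm er"
  proof -
    have "\<eta> * norm \<Delta> \<le> \<eta> * (l * norm Ft + norm er)"
      using norm_triangle_ineq[of "l *\<^sub>R Ft" er] l \<eta>(1) by (intro mult_left_mono) (auto simp: er_def)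
    also have "\<dots> \<le> l * \<epsilon> + norm er"
      using \<eta> l mult_left_mono[OF \<eta>(3) l] mult_right_mono[OF \<eta>(2) norm_ge_zero[of er]]
      by (simp add: algebra_simps)
    finally show ?thesis .
  qed
  ultimately show ?thesis
    unfolding split er_def[symmetric] \<Delta>_def[symmetric]
    using nQ(2) mult_left_mono[of "\<eta> * norm \<Delta>" "l * \<epsilon> + norm er" "4 * nQ"]
    by (simp add: algebra_simps)
qed

lemma exp_weighted_increment_bound:
  fixes a c l \<epsilon> E BW R Wu Wv Wt ev eu e\<theta> e\<tau> :: real
  assumes a: "a > 0" and c: "c \<ge> 0" and l: "l \<ge> 0" and \<epsilon>: "\<epsilon> \<ge> 0"
    and incr: "Wv - Wu \<le> l * (- a * Wt + c) + R" and R: "R \<ge> 0"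
    and W: "\<bar>Wu - Wt\<bar> \<le> \<epsilon>" "\<bar>Wt\<bar> \<le> BW"
    and e: "0 < ev" "ev \<le> E" "0 < e\<theta>" "e\<theta> \<le> E" "\<bar>e\<theta> - e\<tau>\<bar> \<le> \<epsilon>" "\<bar>ev - e\<tau>\<bar> \<le> \<epsilon>"
      "ev - eu = l * a * e\<theta>"
  shows "ev * (Wv - c / a) - eu * (Wu - c / a) \<le> l * \<epsilon> * (a * (E + 2 * BW) + 2 * c) + E * R"
proof -
  have split: "ev * (Wv - c / a) - eu * (Wu - c / a) = ev * (Wv - Wu) + l * a * e\<theta> * (Wu - c / a)"
    using e(7) by (simp add: algebra_simps)
  have "ev * (Wv - Wu) \<le> ev * (l * (- a * Wt + c)) + E * R"
    using mult_left_mono[OF incr, of ev] mult_right_mono[OF e(2) R] e(1) by (simp add: algebra_simps)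
  moreover have "ev * (l * (- a * Wt + c)) + l * a * e\<theta> * (Wu - c / a)
      = l * (a * (e\<theta> * (Wu - Wt) + (e\<theta> - ev) * Wt) + c * (ev - e\<theta>))"
    using a by (simp add: field_simps)
  moreover have "l * (a * (e\<theta> * (Wu - Wt) + (e\<theta> - ev) * Wt) + c * (ev - e\<theta>))
      \<le> l * (\<epsilon> * (a * (E + 2 * BW) + 2 * c))"
  proof (rule mult_left_mono[OF _ l])
    have "e\<theta> * (Wu - Wt) \<le> e\<theta> * \<epsilon>"
      using W(1) e(3) by (intro mult_left_mono) auto
    also have "\<dots> \<le> E * \<epsilon>"
      using mult_right_mono[OF e(4) \<epsilon>] .
    finally have "e\<theta> * (Wu - Wt) \<le> E * \<epsilon>" .
    moreover have "\<bar>e\<theta> - ev\<bar> \<le> 2 * \<epsilon>"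
      using e(5,6) by linarith
    then have "(e\<theta> - ev) * Wt \<le> 2 * \<epsilon> * BW"
      using mult_mono[OF _ W(2)] abs_mult[of "e\<theta> - ev" Wt] abs_ge_self[of "(e\<theta> - ev) * Wt"] \<epsilon>
      by (metis abs_ge_zero mult_nonneg_nonneg zero_le_numeral order_trans)
    moreover have "c * (ev - e\<theta>) \<le> c * (2 * \<epsilon>)"
      using \<open>\<bar>e\<theta> - ev\<bar> \<le> 2 * \<epsilon>\<close> c by (intro mult_left_mono) auto
    ultimately show "a * (e\<theta> * (Wu - Wt) + (e\<theta> - ev) * Wt) + c * (ev - e\<theta>) \<le> \<epsilon> * (a * (E + 2 * BW) + 2 * c)"
      using a mult_left_mono[of "e\<theta> * (Wu - Wt) + (e\<theta> - ev) * Wt" "E * \<epsilon> + 2 * \<epsilon> * BW" a]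
      by (simp add: algebra_simps)
  qed
  ultimately show ?thesis
    unfolding split by (simp add: algebra_simps)
qed

lemma exp_mean_value:
  fixes a u v :: real
  assumes "u \<le> v"
  obtains \<theta> where "u \<le> \<theta>" "\<theta> \<le> v" "exp (a * v) - exp (a * u) = (v - u) * a * exp (a * \<theta>)"
proof (cases "u < v")
  case True
  have "\<exists>z. u < z \<and> z < v \<and> exp (a * v) - exp (a * u) = (v - u) * (exp (a * z) * a)"
    by (rule MVT2[OF True]) (auto intro!: derivative_eq_intros)
  then obtain z where "u < z" "z < v" "exp (a * v) - exp (a * u) = (v - u) * (exp (a * z) * a)"
    by blast
  then show ?thesis
    using that[of z] by (simp add: mult_ac)
qed (use assms that in auto)

lemma tagged_increment_bound:
  fixes X F :: "real \<Rightarrow> real^'k" and Q :: "real^'k^'k"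
  assumes Qsym: "transpose Q = Q" and nQ: "\<And>v. norm (Q *v v) \<le> nQ * norm v" "nQ \<ge> 0"
    and a: "a > 0" and c: "c \<ge> 0"
    and uv: "0 \<le> u" "u \<le> \<tau>" "\<tau> \<le> v" "v \<le> t"
    and ineq: "2 * (X \<tau> \<bullet> (Q *v F \<tau>)) \<le> - a * (X \<tau> \<bullet> (Q *v X \<tau>)) + c"
    and BX: "norm (X \<tau>) \<le> BX" and BW: "\<bar>X \<tau> \<bullet> (Q *v X \<tau>)\<bar> \<le> BW"
    and \<eta>: "0 < \<eta>" "\<eta> \<le> 1" "\<eta> * norm (F \<tau>) \<le> \<epsilon>"
    and close: "\<And>s. u \<le> s \<Longrightarrow> s \<le> v \<Longrightarrow> norm (X s - X \<tau>) \<le> \<eta> \<and> \<bar>exp (a * s) - exp (a * \<tau>)\<bar> \<le> \<epsilon>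
        \<and> \<bar>X s \<bullet> (Q *v X s) - X \<tau> \<bullet> (Q *v X \<tau>)\<bar> \<le> \<epsilon>"
  shows "exp (a * v) * (X v \<bullet> (Q *v X v) - c / a) - exp (a * u) * (X u \<bullet> (Q *v X u) - c / a)
     \<le> \<epsilon> * (a * (exp (a * t) + 2 * BW) + 2 * c + 4 * exp (a * t) * nQ) * (v - u)
        + exp (a * t) * (2 * BX * nQ + 4 * nQ) * norm (X v - X u - (v - u) *\<^sub>R F \<tau>)"
proof -
  define E where "E = exp (a * t)"
  define er where "er = norm (X v - X u - (v - u) *\<^sub>R F \<tau>)"
  define R where "R = 2 * BX * nQ * er + 4 * nQ * ((v - u) * \<epsilon> + er)"
  obtain \<theta> where \<theta>: "u \<le> \<theta>" "\<theta> \<le> v" "exp (a * v) - exp (a * u) = (v - u) * a * exp (a * \<theta>)"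
    using exp_mean_value[of u v a] uv by auto
  have \<epsilon>: "\<epsilon> \<ge> 0"
    using \<eta> by (meson mult_nonneg_nonneg norm_ge_zero less_imp_le order_trans)
  have "X v \<bullet> (Q *v X v) - X u \<bullet> (Q *v X u) \<le> 2 * (v - u) * (X \<tau> \<bullet> (Q *v F \<tau>)) + R"
    using quadratic_form_increment_bound[OF Qsym nQ _ BX _ _ \<eta>, of "v - u" "X u" "X v"] close[of u] close[of v] uv
    by (simp add: R_def er_def)
  also have "2 * (v - u) * (X \<tau> \<bullet> (Q *v F \<tau>)) = (v - u) * (2 * (X \<tau> \<bullet> (Q *v F \<tau>)))"
    by (simp only: mult.assoc mult.left_commute)
  also have "\<dots> \<le> (v - u) * (- a * (X \<tau> \<bullet> (Q *v X \<tau>)) + c)"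
    using uv by (intro mult_left_mono[OF ineq]) simp
  finally have incr: "X v \<bullet> (Q *v X v) - X u \<bullet> (Q *v X u) \<le> (v - u) * (- a * (X \<tau> \<bullet> (Q *v X \<tau>)) + c) + R"
    by simp
  have "R \<ge> 0"
    unfolding R_def er_def using nQ(2) uv \<epsilon> BX
    by (intro add_nonneg_nonneg mult_nonneg_nonneg) (auto intro: order_trans[OF norm_ge_zero])
  have "exp (a * v) * (X v \<bullet> (Q *v X v) - c / a) - exp (a * u) * (X u \<bullet> (Q *v X u) - c / a)
      \<le> (v - u) * \<epsilon> * (a * (E + 2 * BW) + 2 * c) + E * R"
  proof (rule exp_weighted_increment_bound[OF a c _ \<epsilon> incr \<open>R \<ge> 0\<close> _ BW])
    show "\<bar>X u \<bullet> (Q *v X u) - X \<tau> \<bullet> (Q *v X \<tau>)\<bar> \<le> \<epsilon>"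
      using close[of u] uv by simp
    show "exp (a * v) \<le> E" "exp (a * \<theta>) \<le> E"
      using uv \<theta> a by (simp_all add: E_def)
    show "\<bar>exp (a * \<theta>) - exp (a * \<tau>)\<bar> \<le> \<epsilon>" "\<bar>exp (a * v) - exp (a * \<tau>)\<bar> \<le> \<epsilon>"
      using close[of \<theta>] close[of v] \<theta> uv by simp_all
  qed (use uv \<theta> in simp_all)
  then show ?thesis
    unfolding R_def E_def er_def by (simp add: algebra_simps)
qed

lemma continuous_on_pointwise_modulus:
  assumes "continuous_on S f" and "\<And>x. e x > 0"
  obtains \<delta> where "\<And>x. \<delta> x > 0"
    and "\<And>x y. x \<in> S \<Longrightarrow> y \<in> S \<Longrightarrow> dist y x < \<delta> x \<Longrightarrow> dist (f y) (f x) < e x"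
proof -
  have "\<exists>d>0. x \<in> S \<longrightarrow> (\<forall>y\<in>S. dist y x < d \<longrightarrow> dist (f y) (f x) < e x)" for x
    using assms unfolding continuous_on_iff by (cases "x \<in> S") (auto intro: zero_less_one)
  then show ?thesis
    using that by metis
qed

lemma tagged_division_increment_sum_le:
  fixes H :: "real \<Rightarrow> real"
  assumes p: "p tagged_division_of {a..b}" and "a \<le> b"
    and tag: "\<And>\<tau> K. (\<tau>, K) \<in> p \<Longrightarrow> H (Sup K) - H (Inf K) \<le> A * (Sup K - Inf K) + C * e \<tau> K"
    and e: "(\<Sum>(\<tau>, K)\<in>p. e \<tau> K) \<le> \<epsilon>" and C: "C \<ge> 0"
  shows "H b - H a \<le> A * (b - a) + C * \<epsilon>"
proof -
  have "H b - H a = (\<Sum>(\<tau>, K)\<in>p. H (Sup K) - H (Inf K))"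
    using additive_tagged_division_1[OF \<open>a \<le> b\<close> p, of H] by simp
  also have "\<dots> \<le> (\<Sum>(\<tau>, K)\<in>p. A * (Sup K - Inf K) + C * e \<tau> K)"
    using tag by (intro sum_mono) auto
  also have "\<dots> = A * (\<Sum>(\<tau>, K)\<in>p. Sup K - Inf K) + C * (\<Sum>(\<tau>, K)\<in>p. e \<tau> K)"
    by (simp add: split_def sum.distrib sum_distrib_left)
  also have "(\<Sum>(\<tau>, K)\<in>p. Sup K - Inf K) = b - a"
    using additive_tagged_division_1[OF \<open>a \<le> b\<close> p, of "\<lambda>x. x"] by simp
  finally show ?thesis
    using mult_left_mono[OF e C] by linarith
qed

lemma exp_weighted_lyapunov_increment_small:
  fixes X F :: "real \<Rightarrow> real^'k" and Q :: "real^'k^'k"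
  assumes Qsym: "transpose Q = Q" and nQ: "\<And>v. norm (Q *v v) \<le> nQ * norm v" "nQ \<ge> 0"
    and a: "a > 0" and c: "c \<ge> 0" and t: "0 \<le> t" and Xc: "continuous_on {0..t} X"
    and intg: "\<And>u v. 0 \<le> u \<Longrightarrow> u \<le> v \<Longrightarrow> v \<le> t \<Longrightarrow> (F has_integral (X v - X u)) {u..v}"
    and ineq: "\<And>s. 0 \<le> s \<Longrightarrow> s \<le> t \<Longrightarrow> 2 * (X s \<bullet> (Q *v F s)) \<le> - a * (X s \<bullet> (Q *v X s)) + c"
    and BX: "\<And>s. 0 \<le> s \<Longrightarrow> s \<le> t \<Longrightarrow> norm (X s) \<le> BX"
    and BW: "\<And>s. 0 \<le> s \<Longrightarrow> s \<le> t \<Longrightarrow> \<bar>X s \<bullet> (Q *v X s)\<bar> \<le> BW"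
    and \<epsilon>: "\<epsilon> > 0"
  shows "exp (a * t) * (X t \<bullet> (Q *v X t) - c / a) - (X 0 \<bullet> (Q *v X 0) - c / a)
     \<le> \<epsilon> * ((a * (exp (a * t) + 2 * BW) + 2 * c + 4 * exp (a * t) * nQ) * t
        + exp (a * t) * (2 * BX * nQ + 4 * nQ))"
proof -
  define H where "H s = exp (a * s) * (X s \<bullet> (Q *v X s) - c / a)" for s
  define C1 where "C1 = a * (exp (a * t) + 2 * BW) + 2 * c + 4 * exp (a * t) * nQ"
  define C2 where "C2 = exp (a * t) * (2 * BX * nQ + 4 * nQ)"
  \<comment> \<open>the oscillation allowed for X near a tag is scaled by the size of F at the tag\<close>
  define \<eta> where "\<eta> \<tau> = min 1 (\<epsilon> / (1 + norm (F \<tau>)))" for \<tau>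
  have \<eta>: "0 < \<eta> \<tau>" "\<eta> \<tau> \<le> 1" "\<eta> \<tau> * norm (F \<tau>) \<le> \<epsilon>" for \<tau>
  proof -
    show "0 < \<eta> \<tau>" "\<eta> \<tau> \<le> 1"
      using \<epsilon> by (simp_all add: \<eta>_def add_pos_nonneg)
    have "\<eta> \<tau> * norm (F \<tau>) \<le> \<epsilon> / (1 + norm (F \<tau>)) * (1 + norm (F \<tau>))"
      unfolding \<eta>_def using \<epsilon> by (intro mult_mono) auto
    moreover have "1 + norm (F \<tau>) > 0"
      by (simp add: add_pos_nonneg)
    ultimately show "\<eta> \<tau> * norm (F \<tau>) \<le> \<epsilon>"
      by simp
  qed
  have Wc: "continuous_on {0..t} (\<lambda>s. X s \<bullet> (Q *v X s))"
    by (intro continuous_on_inner Xc linear_continuous_on_compose[OF Xc]) simp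
  obtain \<delta>1 where \<delta>1: "\<And>\<tau>. \<delta>1 \<tau> > 0"
      "\<And>\<tau> s. \<tau> \<in> {0..t} \<Longrightarrow> s \<in> {0..t} \<Longrightarrow> dist s \<tau> < \<delta>1 \<tau> \<Longrightarrow> dist (X s) (X \<tau>) < \<eta> \<tau>"
    using continuous_on_pointwise_modulus[OF Xc, of \<eta>] \<eta>(1) by blast
  obtain \<delta>2 where \<delta>2: "\<And>\<tau>. \<delta>2 \<tau> > 0"
      "\<And>\<tau> s. \<tau> \<in> {0..t} \<Longrightarrow> s \<in> {0..t} \<Longrightarrow> dist s \<tau> < \<delta>2 \<tau> \<Longrightarrow> dist (exp (a * s)) (exp (a * \<tau>)) < \<epsilon>"
    using continuous_on_pointwise_modulus[of "{0..t}" "\<lambda>s. exp (a * s)" "\<lambda>_. \<epsilon>"] \<epsilon>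
      continuous_on_exp[OF continuous_on_mult_left[OF continuous_on_id]]
    by blast
  obtain \<delta>3 where \<delta>3: "\<And>\<tau>. \<delta>3 \<tau> > 0"
      "\<And>\<tau> s. \<tau> \<in> {0..t} \<Longrightarrow> s \<in> {0..t} \<Longrightarrow> dist s \<tau> < \<delta>3 \<tau>
        \<Longrightarrow> dist (X s \<bullet> (Q *v X s)) (X \<tau> \<bullet> (Q *v X \<tau>)) < \<epsilon>"
    using continuous_on_pointwise_modulus[OF Wc, of "\<lambda>_. \<epsilon>"] \<epsilon> by blast
  have "F integrable_on cbox 0 t"
    using intg[OF order_refl t order_refl] by (auto simp: cbox_interval)
  then obtain g1 where g1: "gauge g1" and henstock: "\<And>p. p tagged_partial_division_of cbox 0 t \<Longrightarrow> g1 fine p \<Longrightarrow>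
      (\<Sum>(\<tau>, K)\<in>p. norm (Henstock_Kurzweil_Integration.content K *\<^sub>R F \<tau> - integral K F)) < \<epsilon>"
    using Henstock_lemma[OF _ \<epsilon>] by blast
  define g where "g \<tau> = g1 \<tau> \<inter> ball \<tau> (min (\<delta>1 \<tau>) (min (\<delta>2 \<tau>) (\<delta>3 \<tau>)))" for \<tau>
  have "gauge g"
    unfolding g_def using g1 \<delta>1(1) \<delta>2(1) \<delta>3(1) by (intro gauge_Int gauge_ball_dependent) auto
  then obtain p where p: "p tagged_division_of {0..t}" and "g fine p"
    using fine_division_exists_real by blast
  then have "g1 fine p" and ball: "(\<lambda>\<tau>. ball \<tau> (min (\<delta>1 \<tau>) (min (\<delta>2 \<tau>) (\<delta>3 \<tau>)))) fine p"
    unfolding g_def fine_Int by auto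
  have tag: "H (Sup K) - H (Inf K) \<le> \<epsilon> * C1 * (Sup K - Inf K) + C2 * norm (Henstock_Kurzweil_Integration.content K *\<^sub>R F \<tau> - integral K F)"
    if tK: "(\<tau>, K) \<in> p" for \<tau> K
  proof -
    obtain u v where "K = cbox u v"
      using p tK by (meson tagged_division_ofD(4))
    moreover have "\<tau> \<in> K" "K \<subseteq> {0..t}"
      using p tK by (auto dest: tagged_division_ofD(2,3))
    ultimately have K: "K = {u..v}" "u \<le> \<tau>" "\<tau> \<le> v" "0 \<le> u" "v \<le> t"
      by (auto simp: cbox_interval)
    have "K \<subseteq> ball \<tau> (min (\<delta>1 \<tau>) (min (\<delta>2 \<tau>) (\<delta>3 \<tau>)))"
      using ball tK unfolding fine_def by blast
    then have "dist s \<tau> < \<delta>1 \<tau>" "dist s \<tau> < \<delta>2 \<tau>" "dist s \<tau> < \<delta>3 \<tau>" if "u \<le> s" "s \<le> v" for s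
      using that K by (auto simp: dist_commute)
    then have close: "norm (X s - X \<tau>) \<le> \<eta> \<tau> \<and> \<bar>exp (a * s) - exp (a * \<tau>)\<bar> \<le> \<epsilon>
        \<and> \<bar>X s \<bullet> (Q *v X s) - X \<tau> \<bullet> (Q *v X \<tau>)\<bar> \<le> \<epsilon>" if "u \<le> s" "s \<le> v" for s
      using \<delta>1(2)[of \<tau> s] \<delta>2(2)[of \<tau> s] \<delta>3(2)[of \<tau> s] that K
      by (auto simp: dist_norm less_imp_le)
    have incr: "H v - H u \<le> \<epsilon> * C1 * (v - u) + C2 * norm ((v - u) *\<^sub>R F \<tau> - (X v - X u))"
      unfolding H_def C1_def C2_def norm_minus_commute[of "(v - u) *\<^sub>R F \<tau>"]
      using K by (intro tagged_increment_bound[where X=X and F=F and \<tau>=\<tau>, OF Qsym nQ a c K(4,2,3,5)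
          ineq BX BW \<eta>[of \<tau>] close]) auto
    have "integral K F = X v - X u"
      using intg[of u v] K by (auto intro: integral_unique)
    moreover have "Sup K = v" "Inf K = u" "Henstock_Kurzweil_Integration.content K = v - u"
      using K by auto
    ultimately show ?thesis
      using incr by (simp only:)
  qed

  have "BX \<ge> 0"
    using BX[OF order_refl t] norm_ge_zero[of "X 0"] by linarith
  then have C2: "C2 \<ge> 0"
    using nQ(2) unfolding C2_def by (intro mult_nonneg_nonneg add_nonneg_nonneg) auto
  have "p tagged_partial_division_of cbox 0 t"
    using p unfolding tagged_division_of_def cbox_interval by blast
  then have "(\<Sum>(\<tau>, K)\<in>p. norm (Henstock_Kurzweil_Integration.content K *\<^sub>R F \<tau> - integral K F)) \<le> \<epsilon>"
    using less_imp_le[OF henstock[OF _ \<open>g1 fine p\<close>]] by blast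
  then have "H t - H 0 \<le> \<epsilon> * C1 * (t - 0) + C2 * \<epsilon>"
    by (intro tagged_division_increment_sum_le[OF p t tag _ C2])
  then show ?thesis
    by (simp add: H_def C1_def C2_def algebra_simps)
qed

lemma has_integral_increment:
  fixes X F :: "real \<Rightarrow> 'a::banach"
  assumes int: "\<And>u. 0 \<le> u \<Longrightarrow> u \<le> t \<Longrightarrow> (F has_integral (X u - X 0)) {0..u}"
    and "0 \<le> u" "u \<le> v" "v \<le> t"
  shows "(F has_integral (X v - X u)) {u..v}"
proof -
  have "F integrable_on {0..v}"
    using int[of v] assms(2-4) by (auto intro: has_integral_integrable)
  then have "F integrable_on {u..v}" and "integral {0..u} F + integral {u..v} F = integral {0..v} F"
    using assms(2,3) by (auto intro: integrable_on_subinterval Henstock_Kurzweil_Integration.integral_combine)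
  moreover have "integral {0..u} F = X u - X 0" "integral {0..v} F = X v - X 0"
    using int assms(2-4) by (auto intro: integral_unique)
  ultimately show ?thesis
    unfolding has_integral_integrable_integral by (simp add: algebra_simps)
qed

lemma continuous_on_of_has_integral:
  fixes X F :: "real \<Rightarrow> 'a::banach"
  assumes int: "\<And>u. 0 \<le> u \<Longrightarrow> u \<le> t \<Longrightarrow> (F has_integral (X u - X 0)) {0..u}" and "0 \<le> t"
  shows "continuous_on {0..t} X"
proof (rule continuous_on_eq)
  show "continuous_on {0..t} (\<lambda>s. X 0 + integral {0..s} F)"
    using int[OF \<open>0 \<le> t\<close> order_refl]
    by (intro continuous_on_add continuous_on_const indefinite_integral_continuous_1) auto
  show "X 0 + integral {0..s} F = X s" if "s \<in> {0..t}" for s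
    using integral_unique[OF int[of s]] that by simp
qed

lemma quadratic_lyapunov_comparison:
  fixes X F :: "real \<Rightarrow> real^'k" and Q :: "real^'k^'k"
  assumes Qsym: "transpose Q = Q" and a: "a > 0" and c: "c \<ge> 0" and t: "0 \<le> t"
    and int: "\<And>u. 0 \<le> u \<Longrightarrow> u \<le> t \<Longrightarrow> (F has_integral (X u - X 0)) {0..u}"
    and ineq: "\<And>s. 0 \<le> s \<Longrightarrow> s \<le> t \<Longrightarrow> 2 * (X s \<bullet> (Q *v F s)) \<le> - a * (X s \<bullet> (Q *v X s)) + c"
  shows "exp (a * t) * (X t \<bullet> (Q *v X t) - c / a) \<le> X 0 \<bullet> (Q *v X 0) - c / a"
proof -
  have Xc: "continuous_on {0..t} X"
    using continuous_on_of_has_integral[OF int t] by blast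
  obtain BX where "\<forall>y\<in>X ` {0..t}. norm y \<le> BX"
    using compact_imp_bounded[OF compact_continuous_image[OF Xc compact_Icc]]
    unfolding bounded_iff by blast
  then have BX: "\<And>s. 0 \<le> s \<Longrightarrow> s \<le> t \<Longrightarrow> norm (X s) \<le> BX"
    by auto
  obtain nQ where nQ: "nQ > 0" "\<And>v. norm (Q *v v) \<le> nQ * norm v"
    using matrix_vector_mult_bound by blast
  have "BX \<ge> 0"
    using BX[OF order_refl t] norm_ge_zero[of "X 0"] by linarith
  have BW: "\<bar>X s \<bullet> (Q *v X s)\<bar> \<le> nQ * (BX * BX)" if "0 \<le> s" "s \<le> t" for s
    using inner_matrix_vector_bound[OF nQ(2), of "X s" "X s"]
      mult_left_mono[OF mult_mono[OF BX[OF that] BX[OF that] \<open>BX \<ge> 0\<close> norm_ge_zero] less_imp_le[OF nQ(1)]]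
    by linarith
  define K where "K = (a * (exp (a * t) + 2 * (nQ * (BX * BX))) + 2 * c + 4 * exp (a * t) * nQ) * t
        + exp (a * t) * (2 * BX * nQ + 4 * nQ)"
  have K: "K \<ge> 0"
    using \<open>BX \<ge> 0\<close> nQ(1) a c t unfolding K_def
    by (intro add_nonneg_nonneg mult_nonneg_nonneg) auto
  have "exp (a * t) * (X t \<bullet> (Q *v X t) - c / a) - (X 0 \<bullet> (Q *v X 0) - c / a) \<le> 0 + e"
    if "e > 0" for e
  proof -
    define \<epsilon> where "\<epsilon> = e / (K + 1)"
    have "\<epsilon> > 0"
      unfolding \<epsilon>_def using that K by simp
    have "exp (a * t) * (X t \<bullet> (Q *v X t) - c / a) - (X 0 \<bullet> (Q *v X 0) - c / a) \<le> \<epsilon> * K"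
      unfolding K_def
    proof (rule exp_weighted_lyapunov_increment_small[where X=X and F=F and BW="nQ * (BX * BX)"])
      show "(F has_integral X v - X u) {u..v}" if "0 \<le> u" "u \<le> v" "v \<le> t" for u v
        using has_integral_increment[OF int that] .
    qed (use Qsym nQ a c t Xc ineq BX BW \<open>\<epsilon> > 0\<close> in auto)
    also have "\<dots> \<le> e"
      using that K by (simp add: \<epsilon>_def field_simps)
    finally show ?thesis by simp
  qed
  then have "exp (a * t) * (X t \<bullet> (Q *v X t) - c / a) - (X 0 \<bullet> (Q *v X 0) - c / a) \<le> 0"
    by (rule field_le_epsilon)
  then show ?thesis
    by simp
qed

section \<open>Input-to-state stability of the closed loop\<close>

lemma two_mult_le_weighted_squares:
  fixes x y e :: real
  assumes "e > 0"
  shows "2 * x * y \<le> e * x\<^sup>2 + y\<^sup>2 / e"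
proof -
  have "0 \<le> (e * x - y)\<^sup>2 / e"
    using assms by simp
  also have "\<dots> = e * x\<^sup>2 + y\<^sup>2 / e - 2 * x * y"
    using assms by (simp add: power2_eq_square field_simps)
  finally show ?thesis by simp
qed

lemma cross_term_bound:
  fixes P :: "real^'n^'n" and R :: "real^'m^'m" and M :: "real^'m^'n"
  assumes P: "pdef P" and R: "pdef R" and \<epsilon>: "\<epsilon> > 0"
  obtains c where "c \<ge> 0" "\<And>\<xi> d. 2 * (\<xi> \<bullet> (M *v d)) \<le> \<epsilon> * (\<xi> \<bullet> (P *v \<xi>)) + c * (d \<bullet> (R *v d))"
proof -
  obtain mP where mP: "mP > 0" "\<And>v. v \<bullet> (P *v v) \<ge> mP * (norm v)\<^sup>2"
    using pdef_coercive[OF P] by blast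
  obtain mR where mR: "mR > 0" "\<And>v. v \<bullet> (R *v v) \<ge> mR * (norm v)\<^sup>2"
    using pdef_coercive[OF R] by blast
  obtain nM where nM: "nM > 0" "\<And>v. norm (M *v v) \<le> nM * norm v"
    using matrix_vector_mult_bound by blast
  define c where "c = nM\<^sup>2 / (\<epsilon> * mP * mR)"
  have "c \<ge> 0"
    using \<epsilon> mP(1) mR(1) by (simp add: c_def)
  have "2 * (\<xi> \<bullet> (M *v d)) \<le> \<epsilon> * (\<xi> \<bullet> (P *v \<xi>)) + c * (d \<bullet> (R *v d))" for \<xi> d
  proof -
    have "2 * (\<xi> \<bullet> (M *v d)) \<le> 2 * norm \<xi> * (nM * norm d)"
      using norm_cauchy_schwarz[of \<xi> "M *v d"] mult_left_mono[OF nM(2)[of d] norm_ge_zero[of \<xi>]] by linarith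
    also have "\<dots> \<le> \<epsilon> * mP * (norm \<xi>)\<^sup>2 + (nM * norm d)\<^sup>2 / (\<epsilon> * mP)"
      using two_mult_le_weighted_squares[of "\<epsilon> * mP"] \<epsilon> mP(1) by simp
    also have "(nM * norm d)\<^sup>2 / (\<epsilon> * mP) = c * (mR * (norm d)\<^sup>2)"
      using \<epsilon> mP(1) mR(1) by (simp add: c_def power_mult_distrib field_simps)
    finally have "2 * (\<xi> \<bullet> (M *v d)) \<le> \<epsilon> * (mP * (norm \<xi>)\<^sup>2) + c * (mR * (norm d)\<^sup>2)"
      by (simp add: mult.assoc)
    moreover have "\<epsilon> * (mP * (norm \<xi>)\<^sup>2) \<le> \<epsilon> * (\<xi> \<bullet> (P *v \<xi>))"
      using mP(2) \<epsilon> by (intro mult_left_mono) auto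
    moreover have "c * (mR * (norm d)\<^sup>2) \<le> c * (d \<bullet> (R *v d))"
      using mR(2) \<open>c \<ge> 0\<close> by (intro mult_left_mono) auto
    ultimately show ?thesis
      by linarith
  qed
  with \<open>c \<ge> 0\<close> show ?thesis
    using that by blast
qed

lemma small_gain_combination:
  fixes \<alpha>1 \<alpha>2 c V1 V2 D1 D2 W1 W2 :: real
  assumes "\<alpha>1 > 0" "\<alpha>2 > 0" "c \<ge> 0" "V1 \<ge> 0" "V2 \<ge> 0"
    and "D2 \<le> - \<alpha>2 * V2 + W2 + (\<alpha>2 / 2 * V2 + c * V1)" and "D1 \<le> - \<alpha>1 * V1 + W1"
  shows "D2 + (2 * c / \<alpha>1 + 1) * D1
    \<le> - (min \<alpha>1 \<alpha>2 / 2) * (V2 + (2 * c / \<alpha>1 + 1) * V1) + W2 + (2 * c / \<alpha>1 + 1) * W1"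
proof -
  define k where "k = 2 * c / \<alpha>1 + 1"
  have k: "k > 0" "k * \<alpha>1 = 2 * c + \<alpha>1"
    using assms(1,3) by (simp_all add: k_def add_nonneg_pos field_simps)
  have "D2 + k * D1 \<le> (- \<alpha>2 * V2 + W2 + (\<alpha>2 / 2 * V2 + c * V1)) + k * (- \<alpha>1 * V1 + W1)"
    using assms(6,7) k(1) by (intro add_mono mult_left_mono) auto
  also have "\<dots> = - (\<alpha>2 / 2 * V2) - (c + \<alpha>1) * V1 + W2 + k * W1"
    using k(2) by (simp add: algebra_simps)
  also have "\<dots> \<le> - (min \<alpha>1 \<alpha>2 / 2 * V2) - (min \<alpha>1 \<alpha>2 / 2 * (k * V1)) + W2 + k * W1"
  proof -
    have "min \<alpha>1 \<alpha>2 / 2 * V2 \<le> \<alpha>2 / 2 * V2"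
      using assms(5) by (intro mult_right_mono) auto
    moreover have "min \<alpha>1 \<alpha>2 / 2 * (k * V1) \<le> \<alpha>1 / 2 * (k * V1)"
      using assms(4) k(1) by (intro mult_right_mono) auto
    moreover have "\<alpha>1 / 2 * (k * V1) \<le> (c + \<alpha>1) * V1"
      using k(2) assms(1,4) by (simp add: algebra_simps)
    ultimately show ?thesis
      by linarith
  qed
  finally show ?thesis
    unfolding k_def by (simp add: algebra_simps)
qed

lemma classK_linear: "b > 0 \<Longrightarrow> classK (\<lambda>s. b * s)"
  unfolding classK_def by (auto intro!: continuous_intros strict_mono_onI)

lemma exp_neg_linear_tendsto_zero: "b > 0 \<Longrightarrow> ((\<lambda>t. exp (- (b * t))) \<longlongrightarrow> (0::real)) at_top"
  by (rule filterlim_compose[OF exp_at_bot filterlim_compose[OF filterlim_uminus_at_bot_at_top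
        filterlim_tendsto_pos_mult_at_top[OF tendsto_const _ filterlim_ident]]])

lemma classKL_exponential:
  assumes b: "b > 0" and \<kappa>: "\<kappa> > 0"
  shows "classKL (\<lambda>r t. b * r * exp (- (\<kappa> * t)))"
  unfolding classKL_def
proof (intro conjI allI impI)
  show "classK (\<lambda>r. b * r * exp (- (\<kappa> * t)))" for t
    using classK_linear[of "b * exp (- (\<kappa> * t))"] b by (simp add: mult_ac)
  show "b * r * exp (- (\<kappa> * t)) \<le> b * r * exp (- (\<kappa> * s))" if "0 \<le> r" "0 \<le> s" "s \<le> t" for r s t
    using that b \<kappa> by (auto intro!: mult_left_mono)
  show "((\<lambda>t. b * r * exp (- (\<kappa> * t))) \<longlongrightarrow> 0) at_top" for r
    using tendsto_mult_left_zero[OF exp_neg_linear_tendsto_zero[OF \<kappa>], of "b * r"]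
    by (simp add: mult.commute)
qed

lemma ISS_bound_of_comparison:
  fixes n r L U W W0 a c S t :: real
  assumes "L \<ge> 0" "U \<ge> 0" "a > 0" "c \<ge> 0" "r \<ge> 0" "S \<ge> 0"
    and n: "n\<^sup>2 \<le> L * W" and W0: "W0 \<le> U * r\<^sup>2"
    and comparison: "exp (a * t) * (W - c * S\<^sup>2 / a) \<le> W0 - c * S\<^sup>2 / a"
  shows "n \<le> (sqrt (L * U) + 1) * r * exp (- (a / 2 * t)) + (sqrt (L * c / a) + 1) * S"
proof -
  define b1 b2 where "b1 = sqrt (L * U) + 1" and "b2 = sqrt (L * c / a) + 1"
  have b: "L * U \<le> b1\<^sup>2" "L * c / a \<le> b2\<^sup>2" "b1 \<ge> 0" "b2 \<ge> 0"
    using assms(1-4) by (auto simp: b1_def b2_def power2_eq_square algebra_simps)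
  have "exp (- (a * t)) * exp (a * t) = 1"
    by (metis exp_minus_inverse mult.commute)
  then have "W - c * S\<^sup>2 / a = exp (- (a * t)) * (exp (a * t) * (W - c * S\<^sup>2 / a))"
    by (simp only: mult.assoc[symmetric] mult_1)
  also have "\<dots> \<le> exp (- (a * t)) * (W0 - c * S\<^sup>2 / a)"
    by (intro mult_left_mono comparison) simp
  also have "\<dots> \<le> exp (- (a * t)) * (U * r\<^sup>2)"
    using W0 assms(3,4) by (intro mult_left_mono) (auto simp: diff_le_eq add_increasing2)
  finally have "W \<le> exp (- (a * t)) * (U * r\<^sup>2) + c * S\<^sup>2 / a"
    by simp
  then have "n\<^sup>2 \<le> L * (exp (- (a * t)) * (U * r\<^sup>2) + c * S\<^sup>2 / a)"
    using n mult_left_mono[OF _ assms(1)] by (meson order_trans)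
  also have "\<dots> = L * U * r\<^sup>2 * exp (- (a * t)) + L * c / a * S\<^sup>2"
    by (simp add: algebra_simps)
  also have "\<dots> \<le> b1\<^sup>2 * r\<^sup>2 * exp (- (a * t)) + b2\<^sup>2 * S\<^sup>2"
    using b by (intro add_mono mult_right_mono) auto
  also have "\<dots> \<le> (b1 * r * exp (- (a / 2 * t)) + b2 * S)\<^sup>2"
  proof -
    define E where "E = exp (- (a / 2 * t))"
    have "E\<^sup>2 = exp (- (a * t))"
      by (simp add: E_def power2_eq_square flip: exp_add)
    then have "(b1 * r * E + b2 * S)\<^sup>2
        = b1\<^sup>2 * r\<^sup>2 * exp (- (a * t)) + 2 * (b1 * r * E * (b2 * S)) + b2\<^sup>2 * S\<^sup>2"
      by (simp add: power2_sum power_mult_distrib)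
    moreover have "0 \<le> b1 * r * E * (b2 * S)"
      using b assms(5,6) by (simp add: E_def)
    ultimately show ?thesis
      unfolding E_def[symmetric] by linarith
  qed
  finally have "n\<^sup>2 \<le> (b1 * r * exp (- (a / 2 * t)) + b2 * S)\<^sup>2" .
  moreover have "0 \<le> b1 * r * exp (- (a / 2 * t)) + b2 * S"
    using b assms(5,6) by simp
  ultimately show ?thesis
    unfolding b1_def b2_def by (rule power2_le_imp_le)
qed

lemma has_integral_matrix_vector_mult:
  fixes f :: "real \<Rightarrow> real^'n" and M :: "real^'n^'m"
  shows "(f has_integral y) S \<Longrightarrow> ((\<lambda>s. M *v f s) has_integral (M *v y)) S"
  using has_integral_linear[OF _ matrix_vector_mul_bounded_linear[of M], of f y S] by (simp add: o_def)

lemma has_integral_vjoin: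
  fixes f :: "real \<Rightarrow> real^'a" and g :: "real \<Rightarrow> real^'b"
  assumes "(f has_integral y) S" and "(g has_integral z) S"
  shows "((\<lambda>s. vjoin (f s) (g s)) has_integral vjoin y z) S"
proof -
  have vjoin: "vjoin u v = vcat (mat 1) 0 *v u + vcat 0 (mat 1) *v v" for u :: "real^'a" and v :: "real^'b"
    by (simp add: vcat_mult vjoin_add)
  show ?thesis
    unfolding vjoin by (intro has_integral_add has_integral_matrix_vector_mult assms)
qed

lemma closed_loop_ISS_of_dissipation:
  fixes S :: "real^'nx^'nx" and Q :: "real^('nx + 'nx)^('nx + 'nx)"
  assumes S: "invertible S" and Q: "pdef Q" and a: "a > 0" and c: "c \<ge> 0"
    and diss: "\<And>x xh w. 2 * (vjoin (S *v x) (xh - x) \<bullet> (Q *v vjoin (S *v cl_rhs_x A B E Ew Cq p K1 x xh w)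
          (cl_rhs_xh A B C D E Fw Cq p L1 L2 K1 x xh w - cl_rhs_x A B E Ew Cq p K1 x xh w)))
        \<le> - a * (vjoin (S *v x) (xh - x) \<bullet> (Q *v vjoin (S *v x) (xh - x))) + c * (w \<bullet> w)"
  shows "closed_loop_ISS A B C D E Ew Fw Cq p L1 L2 K1"
proof -
  obtain m where m: "m > 0" "\<And>v. v \<bullet> (Q *v v) \<ge> m * (norm v)\<^sup>2"
    using pdef_coercive[OF Q] by blast
  obtain nQ where nQ: "nQ > 0" "\<And>v. norm (Q *v v) \<le> nQ * norm v"
    using matrix_vector_mult_bound by blast
  obtain nS where nS: "nS > 0" "\<And>v. norm (S *v v) \<le> nS * norm v"
    using matrix_vector_mult_bound by blast
  obtain nSi where nSi: "nSi > 0" "\<And>v. norm (matrix_inv S *v v) \<le> nSi * norm v"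
    using matrix_vector_mult_bound by blast
  define Z where "Z x xh = vjoin (S *v x) (xh - x)" for x xh :: "real^'nx"
  define L U where "L = (nSi\<^sup>2 + 1) / m" and "U = nQ * (nS\<^sup>2 + 1)"
  have LU: "L \<ge> 0" "U \<ge> 0"
    using m(1) nQ(1) by (simp_all add: L_def U_def)
  have norm_Z: "(norm (Z x xh))\<^sup>2 = (norm (S *v x))\<^sup>2 + (norm (x - xh))\<^sup>2" for x xh
    by (simp add: Z_def norm_vjoin_power2 norm_minus_commute)
  have norm_Pair_power2: "(norm (x, x - xh))\<^sup>2 = (norm x)\<^sup>2 + (norm (x - xh))\<^sup>2" for x xh :: "real^'nx"
    by (simp add: norm_Pair)
  have lower: "(norm (x, x - xh))\<^sup>2 \<le> L * (Z x xh \<bullet> (Q *v Z x xh))" for x xh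
  proof -
    have "norm x \<le> nSi * norm (S *v x)"
      using nSi(2)[of "S *v x"] by (simp add: matrix_vector_mul_linv[OF S])
    then have "(norm x)\<^sup>2 \<le> nSi\<^sup>2 * (norm (S *v x))\<^sup>2"
      by (metis norm_ge_zero power_mono power_mult_distrib)
    moreover have "(nSi\<^sup>2 + 1) * ((norm (S *v x))\<^sup>2 + (norm (x - xh))\<^sup>2)
        = nSi\<^sup>2 * (norm (S *v x))\<^sup>2 + (norm (S *v x))\<^sup>2 + nSi\<^sup>2 * (norm (x - xh))\<^sup>2 + (norm (x - xh))\<^sup>2"
      by (simp add: algebra_simps)
    ultimately have "(norm (x, x - xh))\<^sup>2 \<le> (nSi\<^sup>2 + 1) * (norm (Z x xh))\<^sup>2"
      using zero_le_power2[of "norm (S *v x)"]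
        mult_nonneg_nonneg[OF zero_le_power2[of nSi] zero_le_power2[of "norm (x - xh)"]]
      unfolding norm_Z norm_Pair_power2 by linarith
    also have "\<dots> \<le> (nSi\<^sup>2 + 1) * (Z x xh \<bullet> (Q *v Z x xh) / m)"
      using m mult_left_mono[OF m(2), of "1 / m"] by (intro mult_left_mono) (auto simp: field_simps)
    finally show ?thesis
      by (simp add: L_def)
  qed
  have upper: "Z x xh \<bullet> (Q *v Z x xh) \<le> U * (norm (x, x - xh))\<^sup>2" for x xh
  proof -
    have "Z x xh \<bullet> (Q *v Z x xh) \<le> nQ * (norm (Z x xh))\<^sup>2"
      using inner_matrix_vector_bound[OF nQ(2), of "Z x xh" "Z x xh"] by (simp add: power2_eq_square)
    also have "(norm (Z x xh))\<^sup>2 \<le> (nS\<^sup>2 + 1) * (norm (x, x - xh))\<^sup>2"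
    proof -
      have "(norm (S *v x))\<^sup>2 \<le> nS\<^sup>2 * (norm x)\<^sup>2"
        using nS(2)[of x] by (metis norm_ge_zero power_mono power_mult_distrib)
      moreover have "(nS\<^sup>2 + 1) * ((norm x)\<^sup>2 + (norm (x - xh))\<^sup>2)
          = nS\<^sup>2 * (norm x)\<^sup>2 + (norm x)\<^sup>2 + nS\<^sup>2 * (norm (x - xh))\<^sup>2 + (norm (x - xh))\<^sup>2"
        by (simp add: algebra_simps)
      ultimately show ?thesis
        using zero_le_power2[of "norm x"]
          mult_nonneg_nonneg[OF zero_le_power2[of nS] zero_le_power2[of "norm (x - xh)"]]
        unfolding norm_Z norm_Pair_power2 by linarith
    qed
    finally show ?thesis
      using nQ(1) by (simp add: U_def mult_left_mono mult.assoc)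
  qed
  show ?thesis
    unfolding closed_loop_ISS_def
  proof (intro exI conjI allI impI)
    show "classKL (\<lambda>r t. (sqrt (L * U) + 1) * r * exp (- (a / 2 * t)))"
      using a LU by (intro classKL_exponential) (auto simp: add_nonneg_pos)
    show "classK (\<lambda>s. (sqrt (L * c / a) + 1) * s)"
      using a c LU by (intro classK_linear) (auto simp: add_nonneg_pos)
    fix x xh :: "real \<Rightarrow> real^'nx" and w and t :: real
    assume sol: "cl_solution A B C D E Ew Fw Cq p L1 L2 K1 x xh w"
      and bdd: "bdd_above ((\<lambda>s. norm (w s)) ` {0..})" and t: "0 \<le> t"
    define Sw where "Sw = (SUP s\<in>{0..}. norm (w s))"
    have w: "norm (w s) \<le> Sw" if "s \<ge> 0" for s
      unfolding Sw_def using that bdd by (intro cSUP_upper) auto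
    then have Sw: "Sw \<ge> 0"
      by (meson norm_ge_zero order_trans order_refl)
    define fx fxh where "fx s = cl_rhs_x A B E Ew Cq p K1 (x s) (xh s) (w s)"
      and "fxh s = cl_rhs_xh A B C D E Fw Cq p L1 L2 K1 (x s) (xh s) (w s)" for s
    have "((\<lambda>s. Z (fx s) (fxh s)) has_integral (Z (x u) (xh u) - Z (x 0) (xh 0))) {0..u}"
      if "0 \<le> u" "u \<le> t" for u
    proof -
      have "(fx has_integral (x u - x 0)) {0..u}" "(fxh has_integral (xh u - xh 0)) {0..u}"
        using sol that unfolding cl_solution_def fx_def fxh_def by auto
      then have "((\<lambda>s. vjoin (S *v fx s) (fxh s - fx s)) has_integral
          vjoin (S *v (x u - x 0)) ((xh u - xh 0) - (x u - x 0))) {0..u}"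
        by (intro has_integral_vjoin has_integral_matrix_vector_mult has_integral_diff)
      moreover have "vjoin (S *v (x u - x 0)) ((xh u - xh 0) - (x u - x 0)) = Z (x u) (xh u) - Z (x 0) (xh 0)"
        by (simp add: Z_def vjoin_diff matrix_vector_mult_diff_distrib algebra_simps)
      ultimately show ?thesis
        by (simp add: Z_def)
    qed
    moreover have "2 * (Z (x s) (xh s) \<bullet> (Q *v Z (fx s) (fxh s)))
        \<le> - a * (Z (x s) (xh s) \<bullet> (Q *v Z (x s) (xh s))) + c * Sw\<^sup>2" if "0 \<le> s" for s
    proof -
      have "w s \<bullet> w s \<le> Sw\<^sup>2"
        using power_mono[OF w[OF that] norm_ge_zero, of 2] by (simp add: power2_norm_eq_inner)
      then show ?thesis
        using diss[of "x s" "xh s" "w s"] mult_left_mono[OF _ c] unfolding Z_def fx_def fxh_def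
        by (smt (verit))
    qed
    ultimately have "exp (a * t) * (Z (x t) (xh t) \<bullet> (Q *v Z (x t) (xh t)) - c * Sw\<^sup>2 / a)
        \<le> Z (x 0) (xh 0) \<bullet> (Q *v Z (x 0) (xh 0)) - c * Sw\<^sup>2 / a"
      using Q c t unfolding pdef_def
      by (intro quadratic_lyapunov_comparison[OF _ a _ t]) auto
    then show "norm (x t, x t - xh t)
        \<le> (sqrt (L * U) + 1) * norm (x 0, x 0 - xh 0) * exp (- (a / 2 * t)) + (sqrt (L * c / a) + 1) * Sw"
      by (intro ISS_bound_of_comparison[OF LU a c norm_ge_zero Sw lower upper])
  qed
qed

lemma closed_loop_dissipation:
  fixes P1 P2 :: "real^'n^'n" and fx fxh :: "real^'n \<Rightarrow> real^'n \<Rightarrow> 'w \<Rightarrow> real^'n"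
    and \<alpha>1 \<alpha>2 c :: real
  defines "k \<equiv> 2 * c / \<alpha>1 + 1"
  assumes P1: "pdef P1" and P2: "pdef P2" and \<alpha>: "\<alpha>1 > 0" "\<alpha>2 > 0" and c: "c \<ge> 0"
    and observer: "\<And>x xh w. 2 * ((xh - x) \<bullet> (P1 *v (fxh x xh w - fx x xh w)))
        \<le> - \<alpha>1 * ((xh - x) \<bullet> (P1 *v (xh - x))) + \<mu>1 * W w"
    and plant: "\<And>x xh w. 2 * ((matrix_inv P2 *v x) \<bullet> fx x xh w)
        \<le> - \<alpha>2 * ((matrix_inv P2 *v x) \<bullet> (P2 *v (matrix_inv P2 *v x))) + \<mu>2 * W w
          + 2 * ((matrix_inv P2 *v x) \<bullet> (M *v (xh - x)))"
    and cross: "\<And>\<xi> d. 2 * (\<xi> \<bullet> (M *v d)) \<le> \<alpha>2 / 2 * (\<xi> \<bullet> (P2 *v \<xi>)) + c * (d \<bullet> (P1 *v d))"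
  shows "2 * (vjoin (matrix_inv P2 *v x) (xh - x) \<bullet> (blk2 P2 0 0 (k *\<^sub>R P1)
          *v vjoin (matrix_inv P2 *v fx x xh w) (fxh x xh w - fx x xh w)))
      \<le> - (min \<alpha>1 \<alpha>2 / 2) * (vjoin (matrix_inv P2 *v x) (xh - x) \<bullet> (blk2 P2 0 0 (k *\<^sub>R P1)
          *v vjoin (matrix_inv P2 *v x) (xh - x))) + (\<mu>2 + k * \<mu>1) * W w"
proof -
  define \<xi> d where "\<xi> = matrix_inv P2 *v x" and "d = xh - x"
  have "2 * (\<xi> \<bullet> fx x xh w) + k * (2 * (d \<bullet> (P1 *v (fxh x xh w - fx x xh w))))
      \<le> - (min \<alpha>1 \<alpha>2 / 2) * (\<xi> \<bullet> (P2 *v \<xi>) + k * (d \<bullet> (P1 *v d))) + \<mu>2 * W w + k * (\<mu>1 * W w)"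
    unfolding k_def
  proof (rule small_gain_combination[OF \<alpha> c pdef_nonneg[OF P1] pdef_nonneg[OF P2]])
    show "2 * (\<xi> \<bullet> fx x xh w) \<le> - \<alpha>2 * (\<xi> \<bullet> (P2 *v \<xi>)) + \<mu>2 * W w
        + (\<alpha>2 / 2 * (\<xi> \<bullet> (P2 *v \<xi>)) + c * (d \<bullet> (P1 *v d)))"
      using plant[of x xh w] cross[of \<xi> d] unfolding \<xi>_def d_def by linarith
  qed (use observer in \<open>simp add: d_def\<close>)
  then show ?thesis
    using matrix_vector_mul_rinv[OF pdef_invertible[OF P2]]
    by (simp add: \<xi>_def d_def blk2_mult_vjoin inner_vjoin matrix_vector_mult_scaleR_left algebra_simps)
qed

theorem corollary2:
  fixes A :: "real^'nx^'nx" and B :: "real^'nu^'nx" and E :: "real^'np^'nx"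
    and Ew :: "real^'nw^'nx" and C :: "real^'nx^'ny" and D :: "real^'nu^'ny"
    and Fw :: "real^'nw^'ny" and Cq :: "real^'nx^'nq"
    and p :: "real^'nq \<Rightarrow> real^'np"
    and N1 N2 :: "((real^'nq^'nq) \<times> (real^'np^'np)) set"
    and T11 T21 :: "real^'nq^'nq" and T12 T22 :: "real^'np^'nq"
    and T13 T23 :: "real^'nq^'np" and T14 T24 :: "real^'np^'np"
    and \<alpha>1 \<alpha>2 \<mu>1 \<mu>2 :: real
    and R1 :: "real^'ny^'nx" and R2 :: "real^'ny^'nq" and R3 :: "real^'nx^'nu"
    and R4 :: "real^'np^'nu"
    and P1 P2 :: "real^'nx^'nx"
    and X1 X2 :: "real^'nq^'nq" and Y1 Y2 :: "real^'np^'np"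
    and At1 At2 :: "real^'nx^'nx" and Et1 Et2 :: "real^'np^'nx"
    and Gam11 Gam21 :: "real^'nq^'nq" and Gam12 Gam22 :: "real^'np^'nq"
    and L1 :: "real^'ny^'nq" and L2 :: "real^'ny^'nx" and K1 :: "real^'nx^'nu"
  assumes p0: "p 0 = 0"
    (* condition (i) *)
    and N1_sym: "\<forall>(X, Y)\<in>N1. transpose X = X \<and> transpose Y = Y"
    and T1_inv: "invertible (blk2 T11 T12 T13 T14)" and T14_inv: "invertible T14"
    and cond_i: "\<forall>(X, Y)\<in>N1. dMM p (transpose (blk2 T11 T12 T13 T14)
                    ** blk2 X 0 0 (- Y) ** blk2 T11 T12 T13 T14)"
    (* condition (ii) *)
    and N2_sym: "\<forall>(X, Y)\<in>N2. transpose X = X \<and> transpose Y = Y \<and> invertible X \<and> invertible Y"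
    and T2_inv: "invertible (blk2 T21 T22 T23 T24)" and T24_inv: "invertible T24"
    and cond_ii: "\<forall>(X, Y)\<in>N2. dMM p (transpose (blk2 T21 T22 T23 T24)
                    ** blk2 (matrix_inv X) 0 0 (- matrix_inv Y) ** blk2 T21 T22 T23 T24)"
    (* condition (iii) *)
    and pos: "\<alpha>1 > 0" "\<alpha>2 > 0" "\<mu>1 > 0" "\<mu>2 > 0"
    and P1_pd: "pdef P1" and P2_pd: "pdef P2"
    and X1_pd: "pdef X1" and Y1_sym: "transpose Y1 = Y1"
    and X2_pd: "pdef X2" and Y2_pd: "pdef Y2"
    and XY1: "(X1, Y1) \<in> N1" and XY2: "(X2, Y2) \<in> N2"
    and At1_def: "At1 = A - E ** matrix_inv T14 ** T13 ** Cq"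
    and At2_def: "At2 = A - E ** matrix_inv T24 ** T23 ** Cq"
    and Et1_def: "Et1 = E ** matrix_inv T14"
    and Et2_def: "Et2 = E ** matrix_inv T24"
    and Gam11_def: "Gam11 = T11 - T12 ** matrix_inv T14 ** T13"
    and Gam21_def: "Gam21 = T21 - T22 ** matrix_inv T24 ** T23"
    and Gam12_def: "Gam12 = T12 ** matrix_inv T14"
    and Gam22_def: "Gam22 = T22 ** matrix_inv T24"
    and LMI1: "nsd (let
        Phi0 = transpose At1 ** P1 + P1 ** At1 + transpose C ** transpose R1 + R1 ** C + \<alpha>1 *\<^sub>R P1;
        Phi = blk2 (blk2 Phi0 (- (P1 ** Et1)) (transpose (- (P1 ** Et1))) (0 :: real^'np^'np))
                   (vcat (P1 ** Ew + R1 ** Fw) (0 :: real^'nw^'np))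
                   (transpose (vcat (P1 ** Ew + R1 ** Fw) (0 :: real^'nw^'np)))
                   (- (\<mu>1 *\<^sub>R mat 1 :: real^'nw^'nw));
        vphi = hcat (hcat (0 :: real^'nx^'np) (mat 1 :: real^'np^'np)) (0 :: real^'nw^'np);
        phi = hcat (hcat (- (X1 ** Gam11 ** Cq + R2 ** C)) (X1 ** Gam12)) (- (R2 ** Fw))
      in blk2 (Phi - transpose vphi ** Y1 ** vphi) (transpose phi) phi (- X1))"
    and LMI2: "nsd (let
        Psi0 = At2 ** P2 + P2 ** transpose At2 + B ** R3 + transpose R3 ** transpose B + \<alpha>2 *\<^sub>R P2;
        Psi = blk2 (blk2 Psi0 (Et2 ** Y2 + B ** R4) (transpose (Et2 ** Y2 + B ** R4)) (0 :: real^'np^'np))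
                   (vcat Ew (0 :: real^'nw^'np))
                   (transpose (vcat Ew (0 :: real^'nw^'np)))
                   (- (\<mu>2 *\<^sub>R mat 1 :: real^'nw^'nw));
        vphi = hcat (hcat (0 :: real^'nx^'np) (mat 1 :: real^'np^'np)) (0 :: real^'nw^'np);
        psi = hcat (hcat (Gam21 ** Cq ** P2) (Gam22 ** Y2)) (0 :: real^'nw^'nq)
      in blk2 (Psi - transpose vphi ** Y2 ** vphi) (transpose psi) psi (- X2))"
    (* choice R4 = 0 and the gains *)
    and R4_zero: "R4 = 0"
    and Gam11_inv: "invertible Gam11"
    and L1_def: "L1 = matrix_inv Gam11 ** matrix_inv X1 ** R2"
    and L2_def: "L2 = matrix_inv P1 ** R1 + E ** matrix_inv T14 ** T13 ** L1"
    and K1_def: "K1 = R3 ** matrix_inv P2"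
  shows "closed_loop_ISS A B C D E Ew Fw Cq p L1 L2 K1"
proof -
  have P1: "transpose P1 = P1" "invertible P1" and P2: "transpose P2 = P2" "invertible P2"
    using P1_pd P2_pd pdef_invertible unfolding pdef_def by auto
  have observer: "2 * ((xh - x) \<bullet> (P1 *v (cl_rhs_xh A B C D E Fw Cq p L1 L2 K1 x xh w - cl_rhs_x A B E Ew Cq p K1 x xh w)))
      \<le> - \<alpha>1 * ((xh - x) \<bullet> (P1 *v (xh - x))) + \<mu>1 * (w \<bullet> w)" for x xh w
    using observer_error_dissipation[OF T14_inv P1(1,2) pdef_invertible[OF X1_pd] Gam11_inv
        bspec[OF cond_i XY1, simplified] At1_def Et1_def Gam11_def Gam12_def LMI1 L1_def L2_def] .
  have plant: "2 * ((matrix_inv P2 *v x) \<bullet> cl_rhs_x A B E Ew Cq p K1 x xh w)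
      \<le> - \<alpha>2 * ((matrix_inv P2 *v x) \<bullet> (P2 *v (matrix_inv P2 *v x))) + \<mu>2 * (w \<bullet> w)
        + 2 * ((matrix_inv P2 *v x) \<bullet> ((B ** K1) *v (xh - x)))" for x xh w
    using plant_dissipation[OF T24_inv P2(1,2) pdef_invertible[OF X2_pd] pdef_invertible[OF Y2_pd] p0
        bspec[OF cond_ii XY2, simplified] At2_def Et2_def Gam21_def Gam22_def LMI2 R4_zero K1_def] .
  obtain c where c: "c \<ge> 0"
    "\<And>\<xi> d. 2 * (\<xi> \<bullet> ((B ** K1) *v d)) \<le> \<alpha>2 / 2 * (\<xi> \<bullet> (P2 *v \<xi>)) + c * (d \<bullet> (P1 *v d))"
    using cross_term_bound[OF P2_pd P1_pd, of "\<alpha>2 / 2" "B ** K1"] pos(2) by auto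
  show ?thesis
  proof (rule closed_loop_ISS_of_dissipation)
    show "invertible (matrix_inv P2)"
      using invertible_matrix_inv[OF P2(2)] .
    show "pdef (blk2 P2 0 0 ((2 * c / \<alpha>1 + 1) *\<^sub>R P1))"
      using pos(1) c(1) by (intro pdef_blk2_diagonal pdef_scaleR P1_pd P2_pd) (simp add: add_nonneg_pos)
    show "min \<alpha>1 \<alpha>2 / 2 > 0" "\<mu>2 + (2 * c / \<alpha>1 + 1) * \<mu>1 \<ge> 0"
      using pos c(1) by (simp_all add: add_nonneg_pos)
  qed (rule closed_loop_dissipation[OF P1_pd P2_pd pos(1,2) c(1) observer plant c(2)])
qed

end
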